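(* Let $n\ge p$, $\mathcal X\in\mathrm{St}(n,p,l)$, $\mathcal U,\mathcal V\in T_{\mathcal X}\mathrm{St}(n,p,l)$, and let $R_{\mathcal X}(\mathcal U)=qf(\mathcal X+\mathcal U)$ be the t-QR based retraction. Put $\mathcal Q=R_{\mathcal X}(\mathcal U)$, $\mathcal C=\mathcal V*(\mathcal Q^\top*(\mathcal X+\mathcal U))^{-1}$, $\mathcal B=\mathcal Q^\top*\mathcal C$, and $\hat B^{(i)}=(L(\mathcal B))^{(i)}$. Then the vector transport by differentiated retraction $\mathcal T_{\mathcal U}\mathcal V:=\frac{d}{dt}R_{\mathcal X}(\mathcal U+t\mathcal V)\big|_{t=0}$ equals $$\mathcal T_{\mathcal U}\mathcal V=\mathcal Q*L^{-1}\Big(\text{the tensor with frontal slices }\mathbf P_{\mathrm{skew}}(\hat B^{(i)}),\ i=1,\dots,l\Big)+(\mathcal I-\mathcal Q*\mathcal Q^\top)*\mathcal C,$$ where for a complex $p\times p$ matrix $B$, $\mathbf P_{\mathrm{skew}}(B)$ is the skew-Hermitian matrix $S$ such that $B-S$ is upper triangular with real diagonal; explicitly $S_{mn}=B_{mn}$ for $m>n$, $S_{mm}=\mathrm i\,\operatorname{Im}(B_{mm})$, and $S_{mn}=-\overline{B_{nm}}$ for $m<n$.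
   Context: Frontal slices $A^{(i)}=\mathcal A(:,:,i)$. The t-product is $\mathcal A*\mathcal B=\operatorname{fold}(\operatorname{bcirc}(\mathcal A)\operatorname{unfold}(\mathcal B))$, where $\operatorname{bcirc}(\mathcal A)$ is the block circulant matrix with $(i,j)$ block $A^{(((i-j)\bmod l)+1)}$, $\operatorname{unfold}$ stacks frontal slices vertically, $\operatorname{fold}$ is its inverse. Transpose: $\mathcal A^\top$ has frontal slices $(A^{(1)})^\top,(A^{(l)})^\top,\dots,(A^{(2)})^\top$. $\mathcal I$ identity tensor; $\mathcal A^{-1}$ the t-product inverse. The DFT $L(\mathcal A)=\hat{\mathcal A}$ has frontal slices $\hat A^{(k)}=\sum_{j=1}^l\omega^{(k-1)(j-1)}A^{(j)}$, $\omega=e^{-2\pi\mathrm i/l}$, $L^{-1}$ its inverse; $\mathcal C=\mathcal A*\mathcal B$ iff $\hat C^{(k)}=\hat A^{(k)}\hat B^{(k)}$. $\mathrm{St}(n,p,l)=\{\mathcal X\in\mathbb R^{n\times p\times l}:\mathcal X^\top*\mathcal X=\mathcal I\}$. For $\mathcal A$ whose DFT slices all have full column rank $p$, $qf(\mathcal A)$ is the factor $\mathcal Q\in\mathrm{St}(n,p,l)$ of the unique t-QR decomposition $\mathcal A=\mathcal Q*\mathcal R$ in which the DFT slices of $\mathcal R$ are upper triangular with real strictly positive diagonal. *)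

theory Defs
  imports Complex_Main "Jordan_Normal_Form.Matrix"
begin

text \<open>Third-order tensors of size n x p x l are represented as lists of l frontal
slices (JNF matrices); slice index k (0-based) corresponds to A^(k+1) in the paper.\<close>

type_synonym 'a tensor = "'a mat list"

definition is_tensor :: "nat \<Rightarrow> nat \<Rightarrow> nat \<Rightarrow> 'a tensor \<Rightarrow> bool" where
  "is_tensor n p l A \<longleftrightarrow> length A = l \<and> (\<forall>k<l. A ! k \<in> carrier_mat n p)"

definition trows :: "'a tensor \<Rightarrow> nat" where "trows A = dim_row (hd A)"
definition tcols :: "'a tensor \<Rightarrow> nat" where "tcols A = dim_col (hd A)"

definition bcirc :: "'a tensor \<Rightarrow> 'a mat" where
  "bcirc A = (let n = trows A; p = tcols A; l = length A in
     mat (n * l) (p * l) (\<lambda>(r, c). (A ! ((r div n + l - c div p) mod l)) $$ (r mod n, c mod p)))"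

definition tunfold :: "'a tensor \<Rightarrow> 'a mat" where
  "tunfold B = (let p = trows B; q = tcols B; l = length B in
     mat (p * l) q (\<lambda>(r, c). (B ! (r div p)) $$ (r mod p, c)))"

definition tfold :: "nat \<Rightarrow> nat \<Rightarrow> 'a mat \<Rightarrow> 'a tensor" where
  "tfold n l M = map (\<lambda>k. mat n (dim_col M) (\<lambda>(i, j). M $$ (k * n + i, j))) [0..<l]"

definition tprod :: "'a::comm_ring_1 tensor \<Rightarrow> 'a tensor \<Rightarrow> 'a tensor" (infixl "\<star>" 70) where
  "A \<star> B = tfold (trows A) (length A) (bcirc A * tunfold B)"

definition ttrans :: "'a tensor \<Rightarrow> 'a tensor" where
  "ttrans A = (let l = length A in map (\<lambda>k. transpose_mat (A ! ((l - k) mod l))) [0..<l])"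

definition tid :: "nat \<Rightarrow> nat \<Rightarrow> 'a::{zero,one} tensor" where
  "tid n l = map (\<lambda>k. if k = 0 then 1\<^sub>m n else 0\<^sub>m n n) [0..<l]"

definition tadd :: "'a::plus tensor \<Rightarrow> 'a tensor \<Rightarrow> 'a tensor" (infixl "\<oplus>\<^sub>t" 65) where
  "A \<oplus>\<^sub>t B = map2 (+) A B"

definition tminus :: "'a::minus tensor \<Rightarrow> 'a tensor \<Rightarrow> 'a tensor" (infixl "\<ominus>\<^sub>t" 65) where
  "A \<ominus>\<^sub>t B = map2 (-) A B"

definition tsmult :: "'a::times \<Rightarrow> 'a tensor \<Rightarrow> 'a tensor" where
  "tsmult c A = map (\<lambda>M. c \<cdot>\<^sub>m M) A"

definition tinv :: "'a::comm_ring_1 tensor \<Rightarrow> 'a tensor" where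
  "tinv A = (THE B. is_tensor (trows A) (trows A) (length A) B \<and>
      A \<star> B = tid (trows A) (length A) \<and> B \<star> A = tid (trows A) (length A))"

definition cten :: "real tensor \<Rightarrow> complex tensor" where
  "cten A = map (map_mat complex_of_real) A"

definition dft_omega :: "nat \<Rightarrow> complex" where
  "dft_omega l = exp (- 2 * pi * \<i> / of_nat l)"

definition tdft :: "complex tensor \<Rightarrow> complex tensor" where
  "tdft A = (let l = length A; n = trows A; p = tcols A in
     map (\<lambda>k. mat n p (\<lambda>(i, c). \<Sum>j<l. dft_omega l ^ (k * j) * (A ! j) $$ (i, c))) [0..<l])"

definition tidft :: "complex tensor \<Rightarrow> complex tensor" where
  "tidft A = (let l = length A; n = trows A; p = tcols A in
     map (\<lambda>j. mat n p (\<lambda>(i, c). (1 / of_nat l) *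
        (\<Sum>k<l. inverse (dft_omega l) ^ (k * j) * (A ! k) $$ (i, c)))) [0..<l])"

definition Stiefel :: "nat \<Rightarrow> nat \<Rightarrow> nat \<Rightarrow> real tensor set" where
  "Stiefel n p l = {X. is_tensor n p l X \<and> ttrans X \<star> X = tid p l}"

definition tangent_St :: "nat \<Rightarrow> nat \<Rightarrow> nat \<Rightarrow> real tensor \<Rightarrow> real tensor set" where
  "tangent_St n p l X = {Z. is_tensor n p l Z \<and> (ttrans X \<star> Z) \<oplus>\<^sub>t (ttrans Z \<star> X) = replicate l (0\<^sub>m p p)}"

definition qf :: "real tensor \<Rightarrow> real tensor" where
  "qf A = (let n = trows A; p = tcols A; l = length A in
     THE Q. Q \<in> Stiefel n p l \<and>
       (\<exists>R. is_tensor p p l R \<and> A = Q \<star> R \<and>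
          (\<forall>k<l. upper_triangular (tdft (cten R) ! k) \<and>
             (\<forall>i<p. Im ((tdft (cten R) ! k) $$ (i, i)) = 0 \<and> Re ((tdft (cten R) ! k) $$ (i, i)) > 0))))"

definition Pskew :: "complex mat \<Rightarrow> complex mat" where
  "Pskew B = mat (dim_row B) (dim_col B) (\<lambda>(m, c).
     if m > c then B $$ (m, c)
     else if m = c then \<i> * complex_of_real (Im (B $$ (m, m)))
     else - cnj (B $$ (c, m)))"

definition tensor_has_deriv_at0 :: "nat \<Rightarrow> nat \<Rightarrow> nat \<Rightarrow> (real \<Rightarrow> real tensor) \<Rightarrow> real tensor \<Rightarrow> bool" where
  "tensor_has_deriv_at0 n p l f D \<longleftrightarrow> is_tensor n p l D \<and>
     (\<forall>\<^sub>F t in nhds 0. is_tensor n p l (f t)) \<and>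
     (\<forall>k<l. \<forall>i<n. \<forall>j<p. ((\<lambda>t. (f t ! k) $$ (i, j)) has_real_derivative (D ! k) $$ (i, j)) (at 0))"

end

theory Submission
  imports Defs "Jordan_Normal_Form.Schur_Decomposition"
begin

text \<open>The DFT along the third mode turns the t-product into the slice-wise matrix product and the
  transpose into the conjugate transpose. Hence \<open>qf\<close> acts slice by slice as the Gram-Schmidt
  \<open>Q\<close> factor of the DFT slices, the positive diagonal making the QR factorisation unique, and
  the slices of \<open>X + U\<close> have full column rank because \<open>X\<^sup>H U\<close> is skew-Hermitian.
  Along \<open>A + t V\<close> the Gram-Schmidt factors \<open>Q(t)\<close>, \<open>R(t)\<close> of a slice are differentiable.
  Differentiating \<open>Q\<^sup>H Q = I\<close> shows that \<open>\<Omega> = Q\<^sup>H Q'\<close> is skew-Hermitian, and differentiating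
  \<open>Q R = A\<close> gives \<open>Q\<^sup>H V R\<^sup>-\<^sup>1 = \<Omega> + R' R\<^sup>-\<^sup>1\<close> with \<open>R' R\<^sup>-\<^sup>1\<close> upper triangular with real
  diagonal. Thus \<open>\<Omega> = P\<^sub>s\<^sub>k\<^sub>e\<^sub>w (Q\<^sup>H V R\<^sup>-\<^sup>1)\<close> and \<open>Q' = Q \<Omega> + (I - Q Q\<^sup>H) V R\<^sup>-\<^sup>1\<close>; the inverse DFT of
  these slice derivatives is the stated formula.\<close>

section \<open>Tensors and the t-product\<close>

lemma sum_lessThan_mult_split:
  fixes f :: "nat \<Rightarrow> 'a::comm_monoid_add"
  shows "(\<Sum>x<s * l. f x) = (\<Sum>m<l. \<Sum>q<s. f (m * s + q))"
proof -
  have "(\<Sum>q<s. f (m * s + q)) = sum f {m * s..<m * s + s}" for m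
    using sum.shift_bounds_nat_ivl[of f 0 "m * s" s] by (simp add: lessThan_atLeast0 add.commute)
  then show ?thesis by (simp add: sum.nat_group mult.commute)
qed

lemma sum_mult_sum_swap:
  fixes f :: "'i \<Rightarrow> 'a::comm_semiring_0"
  shows "(\<Sum>m\<in>A. f m * (\<Sum>m'\<in>B. g m m' * a m')) = (\<Sum>m'\<in>B. a m' * (\<Sum>m\<in>A. f m * g m m'))"
proof -
  have "(\<Sum>m\<in>A. f m * (\<Sum>m'\<in>B. g m m' * a m')) = (\<Sum>m\<in>A. \<Sum>m'\<in>B. f m * g m m' * a m')"
    by (simp add: sum_distrib_left mult.assoc)
  also have "\<dots> = (\<Sum>m'\<in>B. \<Sum>m\<in>A. f m * g m m' * a m')" by (rule sum.swap)
  also have "\<dots> = (\<Sum>m'\<in>B. a m' * (\<Sum>m\<in>A. f m * g m m'))" by (simp add: sum_distrib_left mult_ac)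
  finally show ?thesis .
qed

lemma index_mult_mat_lessThan:
  "A \<in> carrier_mat r s \<Longrightarrow> B \<in> carrier_mat s c \<Longrightarrow> i < r \<Longrightarrow> j < c \<Longrightarrow>
   (A * B) $$ (i, j) = (\<Sum>q<s. A $$ (i, q) * B $$ (q, j))"
  by (simp add: scalar_prod_def lessThan_atLeast0)

lemma is_tensor_slice: "is_tensor n p l A \<Longrightarrow> k < l \<Longrightarrow> A ! k \<in> carrier_mat n p"
  by (simp add: is_tensor_def)

lemma is_tensor_length: "is_tensor n p l A \<Longrightarrow> length A = l"
  by (simp add: is_tensor_def)

lemma trows_is_tensor: "is_tensor n p l A \<Longrightarrow> 0 < l \<Longrightarrow> trows A = n"
  by (cases A) (auto simp: is_tensor_def trows_def)

lemma tcols_is_tensor: "is_tensor n p l A \<Longrightarrow> 0 < l \<Longrightarrow> tcols A = p"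
  by (cases A) (auto simp: is_tensor_def tcols_def)

lemma tensor_eqI:
  assumes "is_tensor n p l A" "is_tensor n p l B"
    and "\<And>k i j. k < l \<Longrightarrow> i < n \<Longrightarrow> j < p \<Longrightarrow> A ! k $$ (i, j) = B ! k $$ (i, j)"
  shows "A = B"
proof (rule nth_equalityI)
  show "length A = length B" using assms by (simp add: is_tensor_def)
  fix k assume "k < length A"
  then have k: "k < l" using assms by (simp add: is_tensor_def)
  show "A ! k = B ! k"
    by (rule eq_matI) (use assms k is_tensor_slice[OF assms(1) k] is_tensor_slice[OF assms(2) k] in auto)
qed

lemma is_tensor_tprod:
  assumes A: "is_tensor r s l A" and B: "is_tensor s c l B" and l: "0 < l"
  shows "is_tensor r c l (A \<star> B)"
proof -
  have "dim_col (tunfold B) = c" using tcols_is_tensor[OF B l] by (simp add: tunfold_def Let_def)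
  then show ?thesis by (simp add: tprod_def tfold_def is_tensor_def trows_is_tensor[OF A l] is_tensor_length[OF A])
qed

lemma tprod_index:
  fixes A B :: "'a::comm_ring_1 tensor"
  assumes A: "is_tensor r s l A" and B: "is_tensor s c l B" and l: "0 < l"
    and k: "k < l" and i: "i < r" and j: "j < c"
  shows "(A \<star> B) ! k $$ (i, j) = (\<Sum>m<l. \<Sum>q<s. A ! ((k + l - m) mod l) $$ (i, q) * B ! m $$ (q, j))"
proof -
  have tA: "trows A = r" "tcols A = s" "length A = l"
    using trows_is_tensor[OF A l] tcols_is_tensor[OF A l] is_tensor_length[OF A] by auto
  have tB: "trows B = s" "tcols B = c" "length B = l"
    using trows_is_tensor[OF B l] tcols_is_tensor[OF B l] is_tensor_length[OF B] by auto
  have bc: "bcirc A \<in> carrier_mat (r * l) (s * l)" by (simp add: bcirc_def tA Let_def)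
  have tu: "tunfold B \<in> carrier_mat (s * l) c" by (simp add: tunfold_def tB Let_def)
  have block: "x * d + y < d * l" if "x < l" "y < d" for x y d :: nat
  proof -
    have "x * d + y < Suc x * d" using that by simp
    also have "\<dots> \<le> l * d" using that by (intro mult_right_mono) auto
    finally show ?thesis by (simp add: mult.commute)
  qed
  have "(A \<star> B) ! k $$ (i, j) = (bcirc A * tunfold B) $$ (k * r + i, j)"
    using k i j bc tu by (simp add: tprod_def tA tfold_def)
  also have "\<dots> = (\<Sum>x<s * l. bcirc A $$ (k * r + i, x) * tunfold B $$ (x, j))"
    using bc tu block[OF k i] j by (simp add: scalar_prod_def lessThan_atLeast0)
  also have "\<dots> = (\<Sum>m<l. \<Sum>q<s. bcirc A $$ (k * r + i, m * s + q) * tunfold B $$ (m * s + q, j))"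
    by (rule sum_lessThan_mult_split)
  also have "\<dots> = (\<Sum>m<l. \<Sum>q<s. A ! ((k + l - m) mod l) $$ (i, q) * B ! m $$ (q, j))"
    using block[OF k i] block j i by (intro sum.cong refl) (simp add: bcirc_def tunfold_def tA tB Let_def)
  finally show ?thesis .
qed

lemma is_tensor_tadd: "is_tensor r c l A \<Longrightarrow> is_tensor r c l B \<Longrightarrow> is_tensor r c l (A \<oplus>\<^sub>t B)"
  by (auto simp: tadd_def is_tensor_def)

lemma tadd_index:
  "is_tensor r c l A \<Longrightarrow> is_tensor r c l B \<Longrightarrow> k < l \<Longrightarrow> i < r \<Longrightarrow> j < c \<Longrightarrow>
   (A \<oplus>\<^sub>t B) ! k $$ (i, j) = A ! k $$ (i, j) + B ! k $$ (i, j)"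
  by (auto simp: tadd_def is_tensor_def)

lemma tadd_assoc:
  fixes A B C :: "'a::semigroup_add tensor"
  assumes A: "is_tensor r c l A" and B: "is_tensor r c l B" and C: "is_tensor r c l C"
  shows "A \<oplus>\<^sub>t (B \<oplus>\<^sub>t C) = (A \<oplus>\<^sub>t B) \<oplus>\<^sub>t C"
  by (rule tensor_eqI[OF is_tensor_tadd[OF A is_tensor_tadd[OF B C]] is_tensor_tadd[OF is_tensor_tadd[OF A B] C]])
     (simp add: tadd_index[OF A is_tensor_tadd[OF B C]] tadd_index[OF is_tensor_tadd[OF A B] C]
       tadd_index[OF B C] tadd_index[OF A B] add.assoc)

lemma is_tensor_tminus: "is_tensor r c l A \<Longrightarrow> is_tensor r c l B \<Longrightarrow> is_tensor r c l (A \<ominus>\<^sub>t B)"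
  by (auto simp: tminus_def is_tensor_def intro!: minus_carrier_mat)

lemma tminus_index:
  "is_tensor r c l A \<Longrightarrow> is_tensor r c l B \<Longrightarrow> k < l \<Longrightarrow> i < r \<Longrightarrow> j < c \<Longrightarrow>
   (A \<ominus>\<^sub>t B) ! k $$ (i, j) = A ! k $$ (i, j) - B ! k $$ (i, j)"
  by (auto simp: tminus_def is_tensor_def)

lemma is_tensor_tsmult: "is_tensor r c l A \<Longrightarrow> is_tensor r c l (tsmult a A)"
  by (auto simp: tsmult_def is_tensor_def)

lemma tsmult_index:
  "is_tensor r c l A \<Longrightarrow> k < l \<Longrightarrow> i < r \<Longrightarrow> j < c \<Longrightarrow> tsmult a A ! k $$ (i, j) = a * A ! k $$ (i, j)"
  by (auto simp: tsmult_def is_tensor_def)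

lemma is_tensor_tid: "is_tensor n n l (tid n l)"
  by (auto simp: tid_def is_tensor_def)

lemma tid_index:
  "k < l \<Longrightarrow> i < n \<Longrightarrow> j < n \<Longrightarrow> tid n l ! k $$ (i, j) = (if k = 0 \<and> i = j then 1 else 0)"
  by (simp add: tid_def)

lemma is_tensor_zero: "is_tensor p q l (replicate l (0\<^sub>m p q))"
  by (simp add: is_tensor_def)

lemma is_tensor_ttrans: "is_tensor r c l A \<Longrightarrow> is_tensor c r l (ttrans A)"
  by (auto simp: ttrans_def is_tensor_def Let_def)

lemma ttrans_index:
  assumes A: "is_tensor r c l A" and k: "k < l" and i: "i < c" and j: "j < r"
  shows "ttrans A ! k $$ (i, j) = A ! ((l - k) mod l) $$ (j, i)"
proof -
  have "A ! ((l - k) mod l) \<in> carrier_mat r c" using A k by (simp add: is_tensor_def)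
  then show ?thesis using k i j by (simp add: ttrans_def is_tensor_length[OF A])
qed

definition rten :: "complex tensor \<Rightarrow> real tensor" where
  "rten Z = map (map_mat Re) Z"

lemma is_tensor_cten: "is_tensor r c l A \<Longrightarrow> is_tensor r c l (cten A)"
  by (auto simp: cten_def is_tensor_def)

lemma cten_index:
  "is_tensor r c l A \<Longrightarrow> k < l \<Longrightarrow> i < r \<Longrightarrow> j < c \<Longrightarrow> cten A ! k $$ (i, j) = of_real (A ! k $$ (i, j))"
  by (auto simp: cten_def is_tensor_def)

lemma is_tensor_rten: "is_tensor r c l Z \<Longrightarrow> is_tensor r c l (rten Z)"
  by (auto simp: rten_def is_tensor_def)

lemma rten_index:
  "is_tensor r c l Z \<Longrightarrow> k < l \<Longrightarrow> i < r \<Longrightarrow> j < c \<Longrightarrow> rten Z ! k $$ (i, j) = Re (Z ! k $$ (i, j))"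
  by (auto simp: rten_def is_tensor_def)

lemma cten_rten:
  assumes Z: "is_tensor r c l Z"
    and real: "\<And>k i j. k < l \<Longrightarrow> i < r \<Longrightarrow> j < c \<Longrightarrow> Im (Z ! k $$ (i, j)) = 0"
  shows "cten (rten Z) = Z"
  by (rule tensor_eqI[OF is_tensor_cten[OF is_tensor_rten[OF Z]] Z])
     (simp add: cten_index[OF is_tensor_rten[OF Z]] rten_index[OF Z] real complex_eq_iff)

lemma cten_inj:
  assumes A: "is_tensor r c l A" and B: "is_tensor r c l B" and eq: "cten A = cten B"
  shows "A = B"
  by (rule tensor_eqI[OF A B]) (metis cten_index[OF A] cten_index[OF B] eq of_real_eq_iff)

lemma cten_tprod:
  assumes A: "is_tensor r s l A" and B: "is_tensor s c l B" and l: "0 < l"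
  shows "cten (A \<star> B) = cten A \<star> cten B"
proof (rule tensor_eqI[OF is_tensor_cten[OF is_tensor_tprod[OF A B l]]
      is_tensor_tprod[OF is_tensor_cten[OF A] is_tensor_cten[OF B] l]])
  fix k i j assume k: "k < l" and i: "i < r" and j: "j < c"
  have "(k + l - m) mod l < l" for m using l by simp
  then show "cten (A \<star> B) ! k $$ (i, j) = (cten A \<star> cten B) ! k $$ (i, j)"
    using k i j
    by (simp add: cten_index[OF is_tensor_tprod[OF A B l]] tprod_index[OF A B l]
        tprod_index[OF is_tensor_cten[OF A] is_tensor_cten[OF B] l] cten_index[OF A] cten_index[OF B])
qed

lemma cten_tid: "cten (tid n l) = tid n l"
  by (rule tensor_eqI[OF is_tensor_cten[OF is_tensor_tid] is_tensor_tid])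
     (simp add: cten_index[OF is_tensor_tid] tid_index)

lemma cten_tadd:
  assumes A: "is_tensor r c l A" and B: "is_tensor r c l B"
  shows "cten (A \<oplus>\<^sub>t B) = cten A \<oplus>\<^sub>t cten B"
  by (rule tensor_eqI[OF is_tensor_cten[OF is_tensor_tadd[OF A B]]
        is_tensor_tadd[OF is_tensor_cten[OF A] is_tensor_cten[OF B]]])
     (simp add: cten_index[OF is_tensor_tadd[OF A B]] tadd_index[OF A B]
        tadd_index[OF is_tensor_cten[OF A] is_tensor_cten[OF B]] cten_index[OF A] cten_index[OF B])

lemma cten_tminus:
  assumes A: "is_tensor r c l A" and B: "is_tensor r c l B"
  shows "cten (A \<ominus>\<^sub>t B) = cten A \<ominus>\<^sub>t cten B"
  by (rule tensor_eqI[OF is_tensor_cten[OF is_tensor_tminus[OF A B]]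
        is_tensor_tminus[OF is_tensor_cten[OF A] is_tensor_cten[OF B]]])
     (simp add: cten_index[OF is_tensor_tminus[OF A B]] tminus_index[OF A B]
        tminus_index[OF is_tensor_cten[OF A] is_tensor_cten[OF B]] cten_index[OF A] cten_index[OF B])

lemma cten_tsmult:
  assumes A: "is_tensor r c l A"
  shows "cten (tsmult a A) = tsmult (of_real a) (cten A)"
  by (rule tensor_eqI[OF is_tensor_cten[OF is_tensor_tsmult[OF A]] is_tensor_tsmult[OF is_tensor_cten[OF A]]])
     (simp add: cten_index[OF is_tensor_tsmult[OF A]] tsmult_index[OF A]
        tsmult_index[OF is_tensor_cten[OF A]] cten_index[OF A])

lemma dft_omega_cis: "dft_omega l = cis (- 2 * pi / real l)"
  by (simp add: dft_omega_def cis_conv_exp field_simps)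

lemma dft_omega_power_length: "0 < l \<Longrightarrow> dft_omega l ^ l = 1"
  by (simp add: dft_omega_cis DeMoivre complex_eq_iff)

lemma dft_omega_nonzero: "dft_omega l \<noteq> 0"
  by (simp add: dft_omega_cis)

lemma cnj_dft_omega: "cnj (dft_omega l) = inverse (dft_omega l)"
  by (simp add: dft_omega_cis cis_cnj cis_inverse)

lemma dft_omega_power_mod:
  assumes "0 < l"
  shows "dft_omega l ^ a = dft_omega l ^ (a mod l)"
proof -
  have "dft_omega l ^ a = dft_omega l ^ (l * (a div l) + a mod l)" by simp
  also have "\<dots> = (dft_omega l ^ l) ^ (a div l) * dft_omega l ^ (a mod l)"
    by (simp only: power_add power_mult)
  finally show ?thesis using dft_omega_power_length[OF assms] by simp
qed

lemma dft_omega_power_cong: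
  "0 < l \<Longrightarrow> a mod l = b mod l \<Longrightarrow> dft_omega l ^ a = dft_omega l ^ b"
  using dft_omega_power_mod by metis

lemma dft_omega_power_neq_1:
  assumes "0 < d" "d < l"
  shows "dft_omega l ^ d \<noteq> 1"
proof
  assume "dft_omega l ^ d = 1"
  then have "cos (real d * (- 2 * pi / real l)) = 1"
    by (metis DeMoivre cis.sel(1) dft_omega_cis one_complex.sel(1))
  then obtain x :: int where x: "real d * (- 2 * pi / real l) = real_of_int x * 2 * pi"
    using cos_one_2pi_int by blast
  then have "pi * (- real d) = pi * (real_of_int x * real l)"
    using assms by (simp add: field_simps)
  then have "- real d = real_of_int x * real l" using pi_neq_zero by (simp only: mult_cancel_left) simp
  then have dx: "- int d = x * int l" by (metis of_int_eq_iff of_int_minus of_int_mult of_int_of_nat_eq)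
  show False
  proof (cases "x < 0")
    case True
    then have "x * int l \<le> -1 * int l" by (intro mult_right_mono) auto
    then show False using dx assms by linarith
  next
    case False
    then have "0 \<le> x * int l" by simp
    then show False using dx assms by linarith
  qed
qed

lemma sum_dft_omega_orthogonal:
  assumes l: "0 < l" and a: "a < l" and b: "b < l"
  shows "(\<Sum>k<l. inverse (dft_omega l) ^ (k * b) * dft_omega l ^ (k * a)) = (if a = b then of_nat l else 0)"
proof -
  let ?w = "dft_omega l"
  define z where "z = inverse ?w ^ b * ?w ^ a"
  have eq: "inverse ?w ^ (k * b) * ?w ^ (k * a) = z ^ k" for k
    by (simp add: z_def power_mult_distrib power_mult mult.commute)
  have zl: "z ^ l = 1"
    unfolding z_def power_mult_distrib
    by (simp add: power_mult[symmetric] mult.commute[of _ l] power_mult dft_omega_power_length[OF l] power_inverse)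
  have z1: "z = 1 \<longleftrightarrow> a = b"
  proof
    assume z: "z = 1"
    show "a = b"
    proof (rule ccontr)
      assume ab: "a \<noteq> b"
      have eqw: "?w ^ a = ?w ^ b" using z dft_omega_nonzero[of l] by (simp add: z_def field_simps power_inverse)
      have "?w ^ (max a b - min a b) = 1"
      proof (cases "a < b")
        case True
        have "?w ^ b = ?w ^ a * ?w ^ (b - a)" using True by (simp add: power_add[symmetric])
        then show ?thesis using eqw dft_omega_nonzero[of l] True by simp
      next
        case False
        have "?w ^ a = ?w ^ b * ?w ^ (a - b)" using False by (simp add: power_add[symmetric])
        then show ?thesis using eqw dft_omega_nonzero[of l] False by simp
      qed
      then show False using dft_omega_power_neq_1[of "max a b - min a b" l] ab a b by auto
    qed
  next
    assume "a = b" then show "z = 1" using dft_omega_nonzero[of l] by (simp add: z_def power_inverse)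
  qed
  show ?thesis unfolding eq using sum_gp_strict[of z l] zl z1 by auto
qed

section \<open>The DFT along the third mode\<close>

lemma is_tensor_tdft: "is_tensor r c l A \<Longrightarrow> 0 < l \<Longrightarrow> is_tensor r c l (tdft A)"
  by (auto simp: tdft_def is_tensor_def Let_def trows_is_tensor tcols_is_tensor)

lemma tdft_index:
  "is_tensor r c l A \<Longrightarrow> 0 < l \<Longrightarrow> k < l \<Longrightarrow> i < r \<Longrightarrow> j < c \<Longrightarrow>
   tdft A ! k $$ (i, j) = (\<Sum>m<l. dft_omega l ^ (k * m) * A ! m $$ (i, j))"
  by (auto simp: tdft_def Let_def trows_is_tensor tcols_is_tensor is_tensor_length)

lemma is_tensor_tidft: "is_tensor r c l A \<Longrightarrow> 0 < l \<Longrightarrow> is_tensor r c l (tidft A)"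
  by (auto simp: tidft_def is_tensor_def Let_def trows_is_tensor tcols_is_tensor)

lemma tidft_index:
  "is_tensor r c l A \<Longrightarrow> 0 < l \<Longrightarrow> k < l \<Longrightarrow> i < r \<Longrightarrow> j < c \<Longrightarrow>
   tidft A ! k $$ (i, j) = (1 / of_nat l) * (\<Sum>m<l. inverse (dft_omega l) ^ (m * k) * A ! m $$ (i, j))"
  by (auto simp: tidft_def Let_def trows_is_tensor tcols_is_tensor is_tensor_length)

lemma tidft_tdft:
  assumes A: "is_tensor r c l A" and l: "0 < l"
  shows "tidft (tdft A) = A"
proof (rule tensor_eqI[OF is_tensor_tidft[OF is_tensor_tdft[OF A l] l] A])
  fix k i j assume k: "k < l" and i: "i < r" and j: "j < c"
  have "tidft (tdft A) ! k $$ (i, j) = (1 / of_nat l) *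
     (\<Sum>m<l. inverse (dft_omega l) ^ (m * k) * (\<Sum>m'<l. dft_omega l ^ (m * m') * A ! m' $$ (i, j)))"
    using k i j by (simp add: tidft_index[OF is_tensor_tdft[OF A l] l] tdft_index[OF A l])
  also have "\<dots> = (1 / of_nat l) * (\<Sum>m'<l. A ! m' $$ (i, j) *
       (\<Sum>m<l. inverse (dft_omega l) ^ (m * k) * dft_omega l ^ (m * m')))"
    by (simp only: sum_mult_sum_swap)
  also have "\<dots> = (1 / of_nat l) * (\<Sum>m'<l. A ! m' $$ (i, j) * (if m' = k then of_nat l else 0))"
    by (intro arg_cong[where f="\<lambda>x. _ * x"] sum.cong refl) (simp add: sum_dft_omega_orthogonal[OF l _ k])
  also have "\<dots> = A ! k $$ (i, j)"
    using k l by (simp add: if_distrib[of "(*) _"] cong: if_cong)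
  finally show "tidft (tdft A) ! k $$ (i, j) = A ! k $$ (i, j)" .
qed

lemma tdft_tidft:
  assumes A: "is_tensor r c l A" and l: "0 < l"
  shows "tdft (tidft A) = A"
proof (rule tensor_eqI[OF is_tensor_tdft[OF is_tensor_tidft[OF A l] l] A])
  fix k i j assume k: "k < l" and i: "i < r" and j: "j < c"
  have "tdft (tidft A) ! k $$ (i, j) = (1 / of_nat l) *
     (\<Sum>m<l. dft_omega l ^ (k * m) * (\<Sum>m'<l. inverse (dft_omega l) ^ (m' * m) * A ! m' $$ (i, j)))"
    using k i j
    by (simp add: tdft_index[OF is_tensor_tidft[OF A l] l] tidft_index[OF A l] sum_distrib_left mult_ac)
  also have "\<dots> = (1 / of_nat l) * (\<Sum>m'<l. A ! m' $$ (i, j) *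
       (\<Sum>m<l. dft_omega l ^ (k * m) * inverse (dft_omega l) ^ (m' * m)))"
    by (simp only: sum_mult_sum_swap)
  also have "\<dots> = (1 / of_nat l) * (\<Sum>m'<l. A ! m' $$ (i, j) * (if m' = k then of_nat l else 0))"
    using sum_dft_omega_orthogonal[OF l k]
    by (intro arg_cong[where f="\<lambda>x. _ * x"] sum.cong refl) (simp add: mult.commute)
  also have "\<dots> = A ! k $$ (i, j)"
    using k l by (simp add: if_distrib[of "(*) _"] cong: if_cong)
  finally show "tdft (tidft A) ! k $$ (i, j) = A ! k $$ (i, j)" .
qed

lemma tdft_eqI:
  fixes A B :: "complex tensor"
  assumes A: "is_tensor r c l A" and B: "is_tensor r c l B" and l: "0 < l"
    and eq: "\<And>k. k < l \<Longrightarrow> tdft A ! k = tdft B ! k"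
  shows "A = B"
proof -
  have "tdft A = tdft B"
    using eq is_tensor_length[OF is_tensor_tdft[OF A l]] is_tensor_length[OF is_tensor_tdft[OF B l]]
    by (intro nth_equalityI) auto
  then show ?thesis using tidft_tdft[OF A l] tidft_tdft[OF B l] by metis
qed

lemma mod_sub_add_cancel: "m \<le> l \<Longrightarrow> a < l \<Longrightarrow> ((a + l - m) mod l + m) mod l = (a :: nat)"
  by (metis le_add_diff_inverse2 mod_add_left_eq mod_add_self2 mod_less trans_le_add2)

lemma mod_add_sub_cancel: "m \<le> l \<Longrightarrow> a < l \<Longrightarrow> ((a + m) mod l + l - m) mod l = (a :: nat)"
proof -
  assume m: "m \<le> l" and a: "a < l"
  have "(a + m) mod l + l - m = (a + m) mod l + (l - m)" using m by arith
  then have "((a + m) mod l + l - m) mod l = ((a + m) + (l - m)) mod l" by (simp add: mod_add_left_eq)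
  also have "(a + m) + (l - m) = a + l" using m by simp
  finally show ?thesis using a by simp
qed

lemma sum_dft_circular_shift:
  fixes f :: "nat \<Rightarrow> complex"
  assumes l: "0 < l" and m: "m < l"
  shows "(\<Sum>k'<l. dft_omega l ^ (k * k') * f ((k' + l - m) mod l)) =
         dft_omega l ^ (k * m) * (\<Sum>a<l. dft_omega l ^ (k * a) * f a)"
proof -
  have "(\<Sum>k'<l. dft_omega l ^ (k * k') * f ((k' + l - m) mod l)) =
        (\<Sum>a<l. dft_omega l ^ (k * m) * (dft_omega l ^ (k * a) * f a))"
  proof (rule sum.reindex_bij_witness[where j="\<lambda>k'. (k' + l - m) mod l" and i="\<lambda>a. (a + m) mod l"])
    fix a assume a: "a \<in> {..<l}"
    then show "((a + l - m) mod l + m) mod l = a" using mod_sub_add_cancel[of m l a] m by simp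
    show "(a + l - m) mod l \<in> {..<l}" using l by simp
    have "dft_omega l ^ (m + (a + l - m) mod l) = dft_omega l ^ a"
      by (rule dft_omega_power_cong[OF l]) (use mod_sub_add_cancel[of m l a] m a in \<open>simp add: add.commute\<close>)
    then have "dft_omega l ^ (k * m) * dft_omega l ^ (k * ((a + l - m) mod l)) = dft_omega l ^ (k * a)"
      by (metis power_add power_mult mult.commute)
    then show "dft_omega l ^ (k * m) * (dft_omega l ^ (k * ((a + l - m) mod l)) * f ((a + l - m) mod l)) =
      dft_omega l ^ (k * a) * f ((a + l - m) mod l)"
      by (metis mult.assoc)
  next
    fix b assume "b \<in> {..<l}"
    then show "((b + m) mod l + l - m) mod l = b" using mod_add_sub_cancel[of m l b] m by simp
    show "(b + m) mod l \<in> {..<l}" using l by simp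
  qed
  then show ?thesis by (simp add: sum_distrib_left)
qed

lemma tdft_tprod:
  fixes A B :: "complex tensor"
  assumes A: "is_tensor r s l A" and B: "is_tensor s c l B" and l: "0 < l" and k: "k < l"
  shows "tdft (A \<star> B) ! k = tdft A ! k * tdft B ! k"
proof -
  note AB = is_tensor_tprod[OF A B l]
  have cA: "tdft A ! k \<in> carrier_mat r s" using is_tensor_slice[OF is_tensor_tdft[OF A l] k] .
  have cB: "tdft B ! k \<in> carrier_mat s c" using is_tensor_slice[OF is_tensor_tdft[OF B l] k] .
  show ?thesis
  proof (rule eq_matI)
    fix i j assume "i < dim_row (tdft A ! k * tdft B ! k)" "j < dim_col (tdft A ! k * tdft B ! k)"
    then have i: "i < r" and j: "j < c" using cA cB by auto
    let ?w = "dft_omega l"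
    have "tdft (A \<star> B) ! k $$ (i, j) = (\<Sum>k'<l. ?w ^ (k * k') *
        (\<Sum>m<l. \<Sum>q<s. A ! ((k' + l - m) mod l) $$ (i, q) * B ! m $$ (q, j)))"
      using i j by (simp add: tdft_index[OF AB l k] tprod_index[OF A B l])
    also have "\<dots> = (\<Sum>k'<l. \<Sum>m<l. \<Sum>q<s. B ! m $$ (q, j) * (?w ^ (k * k') * A ! ((k' + l - m) mod l) $$ (i, q)))"
      by (simp add: sum_distrib_left mult_ac)
    also have "\<dots> = (\<Sum>m<l. \<Sum>q<s. \<Sum>k'<l. B ! m $$ (q, j) * (?w ^ (k * k') * A ! ((k' + l - m) mod l) $$ (i, q)))"
      by (subst sum.swap) (rule sum.cong[OF refl], rule sum.swap)
    also have "\<dots> = (\<Sum>m<l. \<Sum>q<s. B ! m $$ (q, j) *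
        (\<Sum>k'<l. ?w ^ (k * k') * A ! ((k' + l - m) mod l) $$ (i, q)))"
      by (simp add: sum_distrib_left)
    also have "\<dots> = (\<Sum>m<l. \<Sum>q<s. B ! m $$ (q, j) * (?w ^ (k * m) * tdft A ! k $$ (i, q)))"
    proof (intro sum.cong refl)
      fix m q assume "m \<in> {..<l}" "q \<in> {..<s}"
      then show "B ! m $$ (q, j) * (\<Sum>k'<l. ?w ^ (k * k') * A ! ((k' + l - m) mod l) $$ (i, q)) =
            B ! m $$ (q, j) * (?w ^ (k * m) * tdft A ! k $$ (i, q))"
        using sum_dft_circular_shift[OF l, of m k "\<lambda>a. A ! a $$ (i, q)"] i
        by (simp add: tdft_index[OF A l k])
    qed
    also have "\<dots> = (\<Sum>q<s. \<Sum>m<l. B ! m $$ (q, j) * (?w ^ (k * m) * tdft A ! k $$ (i, q)))"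
      by (rule sum.swap)
    also have "\<dots> = (\<Sum>q<s. tdft A ! k $$ (i, q) * (\<Sum>m<l. ?w ^ (k * m) * B ! m $$ (q, j)))"
      by (simp add: sum_distrib_left mult_ac)
    also have "\<dots> = (tdft A ! k * tdft B ! k) $$ (i, j)"
      using i j by (simp add: index_mult_mat_lessThan[OF cA cB] tdft_index[OF B l k])
    finally show "tdft (A \<star> B) ! k $$ (i, j) = (tdft A ! k * tdft B ! k) $$ (i, j)" .
  qed (use is_tensor_slice[OF is_tensor_tdft[OF AB l] k] cA cB in auto)
qed

lemma mat_adjoint_dims [simp]:
  "dim_row (mat_adjoint A) = dim_col A" "dim_col (mat_adjoint A) = dim_row A"
  by (simp_all add: mat_adjoint_def)

lemma mat_adjoint_carrier [simp]: "A \<in> carrier_mat r c \<Longrightarrow> mat_adjoint A \<in> carrier_mat c r"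
  by (rule carrier_matI) auto

lemma index_mat_adjoint [simp]:
  "i < dim_col A \<Longrightarrow> j < dim_row A \<Longrightarrow> mat_adjoint A $$ (i, j) = cnj (A $$ (j, i))"
  by (simp add: mat_adjoint_def mat_of_rows_def)

lemma index_mat_adjoint_mult:
  assumes A: "A \<in> carrier_mat n p" and B: "B \<in> carrier_mat n q" and a: "a < p" and b: "b < q"
  shows "(mat_adjoint A * B) $$ (a, b) = (\<Sum>r<n. cnj (A $$ (r, a)) * B $$ (r, b))"
  using index_mult_mat_lessThan[OF mat_adjoint_carrier[OF A] B a b] A a by simp

lemma mat_adjoint_mat_adjoint: "mat_adjoint (mat_adjoint A) = (A :: complex mat)"
  by (rule eq_matI) auto

lemma mat_adjoint_mult:
  fixes A B :: "complex mat"
  assumes "A \<in> carrier_mat r s" and "B \<in> carrier_mat s c"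
  shows "mat_adjoint (A * B) = mat_adjoint B * mat_adjoint A"
  by (rule eq_matI) (use assms in \<open>auto simp: scalar_prod_def cnj_sum mult.commute\<close>)

lemma map_mat_cnj_mult:
  fixes A B :: "complex mat"
  assumes "A \<in> carrier_mat r s" and "B \<in> carrier_mat s c"
  shows "map_mat cnj (A * B) = map_mat cnj A * map_mat cnj B"
  by (rule eq_matI) (use assms in \<open>auto simp: scalar_prod_def cnj_sum\<close>)

lemma reflect_mod_reflect: "m < l \<Longrightarrow> (l - (l - m) mod l) mod l = (m :: nat)"
  by (cases "m = 0") auto

lemma sum_lessThan_reflect_mod:
  fixes l :: nat
  assumes "0 < l"
  shows "(\<Sum>m<l. g ((l - m) mod l)) = (\<Sum>m<l. g m)"
  by (rule sum.reindex_bij_witness[where j="\<lambda>m. (l - m) mod l" and i="\<lambda>m. (l - m) mod l"])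
     (use assms in \<open>auto simp: reflect_mod_reflect\<close>)

lemma dft_omega_power_reflect:
  assumes l: "0 < l" and m: "m < l"
  shows "dft_omega l ^ (((l - m) mod l) * j) = inverse (dft_omega l) ^ (m * j)"
proof -
  have "dft_omega l ^ ((l - m) mod l + m) = dft_omega l ^ 0"
    by (rule dft_omega_power_cong[OF l]) (use m in \<open>cases "m = 0"; simp\<close>)
  then have "dft_omega l ^ ((l - m) mod l) = inverse (dft_omega l ^ m)"
    by (simp add: power_add field_simps dft_omega_nonzero)
  then show ?thesis by (simp add: power_mult power_inverse)
qed

lemma tdft_ttrans:
  assumes A: "is_tensor r c l A" and l: "0 < l" and k: "k < l"
  shows "tdft (cten (ttrans A)) ! k = mat_adjoint (tdft (cten A) ! k)"
proof -
  note T = is_tensor_ttrans[OF A]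
  have c1: "tdft (cten (ttrans A)) ! k \<in> carrier_mat c r"
    using is_tensor_slice[OF is_tensor_tdft[OF is_tensor_cten[OF T] l] k] .
  have c2: "tdft (cten A) ! k \<in> carrier_mat r c"
    using is_tensor_slice[OF is_tensor_tdft[OF is_tensor_cten[OF A] l] k] .
  show ?thesis
  proof (rule eq_matI)
    fix i j assume "i < dim_row (mat_adjoint (tdft (cten A) ! k))" "j < dim_col (mat_adjoint (tdft (cten A) ! k))"
    then have i: "i < c" and j: "j < r" using c2 by auto
    have "(l - m) mod l < l" for m using l by simp
    then have "tdft (cten (ttrans A)) ! k $$ (i, j) =
        (\<Sum>m<l. dft_omega l ^ (k * m) * of_real (A ! ((l - m) mod l) $$ (j, i)))"
      using i j by (simp add: tdft_index[OF is_tensor_cten[OF T] l k] cten_index[OF T] ttrans_index[OF A])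
    also have "\<dots> = (\<Sum>m<l. dft_omega l ^ (k * ((l - m) mod l)) *
        of_real (A ! ((l - (l - m) mod l) mod l) $$ (j, i)))"
      by (rule sum_lessThan_reflect_mod[OF l, symmetric,
            where g="\<lambda>m. dft_omega l ^ (k * m) * of_real (A ! ((l - m) mod l) $$ (j, i))"])
    also have "\<dots> = (\<Sum>m<l. inverse (dft_omega l) ^ (m * k) * of_real (A ! m $$ (j, i)))"
    proof (intro sum.cong refl)
      fix m assume "m \<in> {..<l}"
      then have "(l - (l - m) mod l) mod l = m" by (simp add: reflect_mod_reflect)
      then show "dft_omega l ^ (k * ((l - m) mod l)) * of_real (A ! ((l - (l - m) mod l) mod l) $$ (j, i)) =
          inverse (dft_omega l) ^ (m * k) * of_real (A ! m $$ (j, i))"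
        using \<open>m \<in> {..<l}\<close> dft_omega_power_reflect[OF l, of m k] by (simp add: mult.commute[of k])
    qed
    also have "\<dots> = cnj (tdft (cten A) ! k $$ (j, i))"
      using i j
      by (simp add: tdft_index[OF is_tensor_cten[OF A] l k] cten_index[OF A] cnj_sum cnj_dft_omega
          complex_cnj_power mult.commute[of k])
    also have "\<dots> = mat_adjoint (tdft (cten A) ! k) $$ (i, j)" using c2 i j by simp
    finally show "tdft (cten (ttrans A)) ! k $$ (i, j) = mat_adjoint (tdft (cten A) ! k) $$ (i, j)" .
  qed (use c1 c2 in auto)
qed

lemma tdft_tid:
  assumes l: "0 < l" and k: "k < l"
  shows "tdft (tid n l) ! k = 1\<^sub>m n"
proof (rule eq_matI)
  fix i j assume "i < dim_row (1\<^sub>m n :: complex mat)" "j < dim_col (1\<^sub>m n :: complex mat)"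
  then have i: "i < n" and j: "j < n" by auto
  have "tdft (tid n l) ! k $$ (i, j) = (\<Sum>m<l. dft_omega l ^ (k * m) * (if m = 0 \<and> i = j then 1 else 0))"
    using i j by (simp add: tdft_index[OF is_tensor_tid l k] tid_index)
  also have "\<dots> = (\<Sum>m<l. if m = 0 then (if i = j then 1 else 0) else 0)"
    by (intro sum.cong) auto
  also have "\<dots> = (1\<^sub>m n :: complex mat) $$ (i, j)" using l i j by simp
  finally show "tdft (tid n l) ! k $$ (i, j) = (1\<^sub>m n :: complex mat) $$ (i, j)" .
qed (use is_tensor_slice[OF is_tensor_tdft[OF is_tensor_tid l] k] in auto)

lemma tdft_tadd:
  assumes A: "is_tensor r c l A" and B: "is_tensor r c l B" and l: "0 < l" and k: "k < l"
  shows "tdft (A \<oplus>\<^sub>t B) ! k = tdft A ! k + tdft B ! k"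
proof -
  note cA = is_tensor_slice[OF is_tensor_tdft[OF A l] k] and cB = is_tensor_slice[OF is_tensor_tdft[OF B l] k]
  show ?thesis
    by (rule eq_matI)
       (use cA cB is_tensor_slice[OF is_tensor_tdft[OF is_tensor_tadd[OF A B] l] k] in
        \<open>auto simp: tdft_index[OF is_tensor_tadd[OF A B] l k] tdft_index[OF A l k] tdft_index[OF B l k]
           tadd_index[OF A B] distrib_left sum.distrib\<close>)
qed

lemma tdft_tminus:
  assumes A: "is_tensor r c l A" and B: "is_tensor r c l B" and l: "0 < l" and k: "k < l"
  shows "tdft (A \<ominus>\<^sub>t B) ! k = tdft A ! k - tdft B ! k"
proof -
  note cA = is_tensor_slice[OF is_tensor_tdft[OF A l] k] and cB = is_tensor_slice[OF is_tensor_tdft[OF B l] k]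
  show ?thesis
    by (rule eq_matI)
       (use cA cB is_tensor_slice[OF is_tensor_tdft[OF is_tensor_tminus[OF A B] l] k] in
        \<open>auto simp: tdft_index[OF is_tensor_tminus[OF A B] l k] tdft_index[OF A l k] tdft_index[OF B l k]
           tminus_index[OF A B] right_diff_distrib sum_subtractf\<close>)
qed

lemma tdft_tsmult:
  assumes A: "is_tensor r c l A" and l: "0 < l" and k: "k < l"
  shows "tdft (tsmult a A) ! k = a \<cdot>\<^sub>m tdft A ! k"
proof -
  note cA = is_tensor_slice[OF is_tensor_tdft[OF A l] k]
  show ?thesis
    by (rule eq_matI)
       (use cA is_tensor_slice[OF is_tensor_tdft[OF is_tensor_tsmult[OF A] l] k] in
        \<open>auto simp: tdft_index[OF is_tensor_tsmult[OF A] l k] tdft_index[OF A l k]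
           tsmult_index[OF A] sum_distrib_left mult_ac\<close>)
qed

lemma tdft_cten_reflect:
  assumes A: "is_tensor r c l A" and l: "0 < l" and k: "k < l" and i: "i < r" and j: "j < c"
  shows "tdft (cten A) ! ((l - k) mod l) $$ (i, j) = cnj (tdft (cten A) ! k $$ (i, j))"
proof -
  have "(l - k) mod l < l" using l by simp
  then show ?thesis
    using k i j
    by (simp add: tdft_index[OF is_tensor_cten[OF A] l] cten_index[OF A] dft_omega_power_reflect[OF l k]
        cnj_sum cnj_dft_omega complex_cnj_power mult.commute[of k])
qed

lemma Im_tidft_reflect:
  assumes W: "is_tensor r c l W" and l: "0 < l"
    and sym: "\<And>k i j. k < l \<Longrightarrow> i < r \<Longrightarrow> j < c \<Longrightarrow> W ! ((l - k) mod l) $$ (i, j) = cnj (W ! k $$ (i, j))"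
    and k: "k < l" and i: "i < r" and j: "j < c"
  shows "Im (tidft W ! k $$ (i, j)) = 0"
proof -
  have "cnj (tidft W ! k $$ (i, j)) =
      (1 / of_nat l) * (\<Sum>m<l. dft_omega l ^ (m * k) * W ! ((l - m) mod l) $$ (i, j))"
    using k i j sym by (simp add: tidft_index[OF W l] cnj_sum cnj_dft_omega complex_cnj_power)
  also have "(\<Sum>m<l. dft_omega l ^ (m * k) * W ! ((l - m) mod l) $$ (i, j)) =
      (\<Sum>m<l. (\<lambda>x. dft_omega l ^ (((l - x) mod l) * k) * W ! x $$ (i, j)) ((l - m) mod l))"
    by (intro sum.cong refl) (simp add: reflect_mod_reflect)
  also have "\<dots> = (\<Sum>m<l. dft_omega l ^ (((l - m) mod l) * k) * W ! m $$ (i, j))"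
    by (rule sum_lessThan_reflect_mod[OF l])
  also have "\<dots> = (\<Sum>m<l. inverse (dft_omega l) ^ (m * k) * W ! m $$ (i, j))"
    by (intro sum.cong refl) (simp add: dft_omega_power_reflect[OF l])
  finally have "cnj (tidft W ! k $$ (i, j)) = tidft W ! k $$ (i, j)"
    using k i j by (simp add: tidft_index[OF W l])
  then show ?thesis by (metis Reals_cnj_iff complex_is_Real_iff)
qed

definition dft_slice :: "real tensor \<Rightarrow> nat \<Rightarrow> complex mat" where
  "dft_slice A k = tdft (cten A) ! k"

lemma dft_slice_carrier: "is_tensor r c l A \<Longrightarrow> 0 < l \<Longrightarrow> k < l \<Longrightarrow> dft_slice A k \<in> carrier_mat r c"
  unfolding dft_slice_def by (rule is_tensor_slice[OF is_tensor_tdft[OF is_tensor_cten]])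

lemma dft_slice_tprod:
  assumes "is_tensor r s l A" "is_tensor s c l B" "0 < l" "k < l"
  shows "dft_slice (A \<star> B) k = dft_slice A k * dft_slice B k"
  unfolding dft_slice_def cten_tprod[OF assms(1-3)]
  by (rule tdft_tprod[OF is_tensor_cten[OF assms(1)] is_tensor_cten[OF assms(2)] assms(3,4)])

lemma dft_slice_ttrans:
  "is_tensor r c l A \<Longrightarrow> 0 < l \<Longrightarrow> k < l \<Longrightarrow> dft_slice (ttrans A) k = mat_adjoint (dft_slice A k)"
  unfolding dft_slice_def by (rule tdft_ttrans)

lemma dft_slice_tadd:
  assumes "is_tensor r c l A" "is_tensor r c l B" "0 < l" "k < l"
  shows "dft_slice (A \<oplus>\<^sub>t B) k = dft_slice A k + dft_slice B k"
  unfolding dft_slice_def cten_tadd[OF assms(1,2)]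
  by (rule tdft_tadd[OF is_tensor_cten[OF assms(1)] is_tensor_cten[OF assms(2)] assms(3,4)])

lemma dft_slice_tminus:
  assumes "is_tensor r c l A" "is_tensor r c l B" "0 < l" "k < l"
  shows "dft_slice (A \<ominus>\<^sub>t B) k = dft_slice A k - dft_slice B k"
  unfolding dft_slice_def cten_tminus[OF assms(1,2)]
  by (rule tdft_tminus[OF is_tensor_cten[OF assms(1)] is_tensor_cten[OF assms(2)] assms(3,4)])

lemma dft_slice_tsmult:
  "is_tensor r c l A \<Longrightarrow> 0 < l \<Longrightarrow> k < l \<Longrightarrow> dft_slice (tsmult t A) k = of_real t \<cdot>\<^sub>m dft_slice A k"
  unfolding dft_slice_def cten_tsmult by (rule tdft_tsmult[OF is_tensor_cten])

lemma dft_slice_tid: "0 < l \<Longrightarrow> k < l \<Longrightarrow> dft_slice (tid n l) k = 1\<^sub>m n"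
  unfolding dft_slice_def cten_tid by (rule tdft_tid)

lemma dft_slice_zero:
  assumes l: "0 < l" and k: "k < l"
  shows "dft_slice (replicate l (0\<^sub>m p q)) k = 0\<^sub>m p q"
  by (rule eq_matI)
     (use dft_slice_carrier[OF is_tensor_zero l k] in
      \<open>auto simp: dft_slice_def tdft_index[OF is_tensor_cten[OF is_tensor_zero] l k]
         cten_index[OF is_tensor_zero]\<close>)

lemma dft_slice_eqI:
  assumes A: "is_tensor r c l A" and B: "is_tensor r c l B" and l: "0 < l"
    and eq: "\<And>k. k < l \<Longrightarrow> dft_slice A k = dft_slice B k"
  shows "A = B"
  by (rule cten_inj[OF A B tdft_eqI[OF is_tensor_cten[OF A] is_tensor_cten[OF B] l]])
     (use eq in \<open>simp add: dft_slice_def\<close>)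

lemma dft_slice_reflect:
  assumes A: "is_tensor r c l A" and l: "0 < l" and k: "k < l"
  shows "dft_slice A ((l - k) mod l) = map_mat cnj (dft_slice A k)"
proof -
  have "(l - k) mod l < l" using l by simp
  then show ?thesis
    by (intro eq_matI)
       (use dft_slice_carrier[OF A l k] dft_slice_carrier[OF A l] tdft_cten_reflect[OF A l k] in
        \<open>auto simp: dft_slice_def\<close>)
qed

lemma ex_tensor_dft_slices:
  assumes W: "\<And>k. k < l \<Longrightarrow> W k \<in> carrier_mat r c" and l: "0 < l"
    and sym: "\<And>k. k < l \<Longrightarrow> W ((l - k) mod l) = map_mat cnj (W k)"
  obtains A where "is_tensor r c l A" and "\<And>k. k < l \<Longrightarrow> dft_slice A k = W k"
proof -
  define Z where "Z = map W [0..<l]"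
  have Z: "is_tensor r c l Z" using W by (simp add: Z_def is_tensor_def)
  have Zs: "Z ! ((l - k) mod l) $$ (i, j) = cnj (Z ! k $$ (i, j))" if "k < l" "i < r" "j < c" for k i j
  proof -
    have "(l - k) mod l < l" using l by simp
    then show ?thesis using sym[OF that(1)] W[OF that(1)] that by (simp add: Z_def)
  qed
  have "cten (rten (tidft Z)) = tidft Z"
    by (rule cten_rten[OF is_tensor_tidft[OF Z l] Im_tidft_reflect[OF Z l Zs]])
  then have "dft_slice (rten (tidft Z)) k = W k" if "k < l" for k
    using tdft_tidft[OF Z l] that by (simp add: dft_slice_def Z_def)
  then show ?thesis using that is_tensor_rten[OF is_tensor_tidft[OF Z l]] by blast
qed

section \<open>Gram-Schmidt orthonormalisation\<close>

text \<open>An \<open>n \<times> p\<close> matrix is handled as the function \<open>a i j\<close> of its entries, so that the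
  Gram-Schmidt process can be run on entries that depend on a parameter without carrying
  dimension side conditions.\<close>

definition cinner :: "nat \<Rightarrow> (nat \<Rightarrow> complex) \<Rightarrow> (nat \<Rightarrow> complex) \<Rightarrow> complex" where
  "cinner n u v = (\<Sum>r<n. cnj (u r) * v r)"

definition cnorm :: "nat \<Rightarrow> (nat \<Rightarrow> complex) \<Rightarrow> real" where
  "cnorm n w = sqrt (\<Sum>r<n. (cmod (w r))\<^sup>2)"

function gs_col :: "nat \<Rightarrow> (nat \<Rightarrow> nat \<Rightarrow> complex) \<Rightarrow> nat \<Rightarrow> nat \<Rightarrow> complex" where
  "gs_col n a j = (let w = (\<lambda>i. a i j - (\<Sum>m<j. cinner n (gs_col n a m) (\<lambda>r. a r j) * gs_col n a m i))
                in (\<lambda>i. w i / of_real (cnorm n w)))"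
  by pat_completeness auto
termination by (relation "measure (\<lambda>(n,a,j). j)") auto

declare gs_col.simps[simp del]

definition gs_residual :: "nat \<Rightarrow> (nat \<Rightarrow> nat \<Rightarrow> complex) \<Rightarrow> nat \<Rightarrow> nat \<Rightarrow> complex" where
  "gs_residual n a j = (\<lambda>i. a i j - (\<Sum>m<j. cinner n (gs_col n a m) (\<lambda>r. a r j) * gs_col n a m i))"

lemma gs_col_eq: "gs_col n a j i = gs_residual n a j i / of_real (cnorm n (gs_residual n a j))"
  by (subst gs_col.simps) (simp add: gs_residual_def Let_def)

lemma cinner_cong: "(\<And>r. r < n \<Longrightarrow> v r = v' r) \<Longrightarrow> cinner n u v = cinner n u v'"
  by (simp add: cinner_def)

lemma cinner_cnj: "cinner n u v = cnj (cinner n v u)"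
  by (simp add: cinner_def cnj_sum mult.commute)

lemma cinner_self: "cinner n w w = of_real ((cnorm n w)\<^sup>2)"
proof -
  have "cinner n w w = (\<Sum>r<n. of_real ((cmod (w r))\<^sup>2))"
    unfolding cinner_def by (intro sum.cong refl) (subst complex_norm_square, rule mult.commute)
  also have "\<dots> = of_real ((cnorm n w)\<^sup>2)"
    by (simp add: cnorm_def sum_nonneg)
  finally show ?thesis .
qed

lemma cinner_diff_sum:
  "cinner n u (\<lambda>i. x i - (\<Sum>m\<in>S. c m * y m i)) = cinner n u x - (\<Sum>m\<in>S. c m * cinner n u (y m))"
proof -
  have "cinner n u (\<lambda>i. x i - (\<Sum>m\<in>S. c m * y m i)) = cinner n u x - (\<Sum>r<n. \<Sum>m\<in>S. c m * (cnj (u r) * y m r))"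
    by (simp add: cinner_def right_diff_distrib sum_subtractf sum_distrib_left mult_ac)
  also have "(\<Sum>r<n. \<Sum>m\<in>S. c m * (cnj (u r) * y m r)) = (\<Sum>m\<in>S. \<Sum>r<n. c m * (cnj (u r) * y m r))"
    by (rule sum.swap)
  also have "\<dots> = (\<Sum>m\<in>S. c m * cinner n u (y m))"
    by (simp add: cinner_def sum_distrib_left)
  finally show ?thesis .
qed

lemma cinner_sum:
  "cinner n u (\<lambda>i. (\<Sum>m\<in>S. c m * y m i)) = (\<Sum>m\<in>S. c m * cinner n u (y m))"
proof -
  have "cinner n u (\<lambda>i. (\<Sum>m\<in>S. c m * y m i)) = (\<Sum>r<n. \<Sum>m\<in>S. c m * (cnj (u r) * y m r))"
    by (simp add: cinner_def sum_distrib_left mult_ac)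
  also have "\<dots> = (\<Sum>m\<in>S. \<Sum>r<n. c m * (cnj (u r) * y m r))"
    by (rule sum.swap)
  also have "\<dots> = (\<Sum>m\<in>S. c m * cinner n u (y m))"
    by (simp add: cinner_def sum_distrib_left)
  finally show ?thesis .
qed

lemma cinner_divide_right: "cinner n u (\<lambda>i. v i / c) = cinner n u v / c"
  by (simp add: cinner_def sum_divide_distrib)

lemma cinner_divide_left: "cinner n (\<lambda>i. v i / of_real c) w = cinner n v w / of_real c"
  by (simp add: cinner_def sum_divide_distrib)

lemma cnorm_nonneg: "0 \<le> cnorm n w"
  by (simp add: cnorm_def sum_nonneg)

lemma cinner_cong2:
  "(\<And>r. r < n \<Longrightarrow> u r = u' r) \<Longrightarrow> (\<And>r. r < n \<Longrightarrow> v r = v' r) \<Longrightarrow> cinner n u v = cinner n u' v'"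
  by (simp add: cinner_def)

lemma cnorm_cong: "(\<And>r. r < n \<Longrightarrow> w r = w' r) \<Longrightarrow> cnorm n w = cnorm n w'"
  by (simp add: cnorm_def)

lemma cnorm_eqI:
  assumes "cinner n w w = of_real (c\<^sup>2)" "0 \<le> c"
  shows "cnorm n w = c"
proof -
  have "(cnorm n w)\<^sup>2 = c\<^sup>2" using assms(1) cinner_self[of n w] by (metis of_real_eq_iff)
  then show ?thesis using cnorm_nonneg[of n w] assms(2) by (metis power2_eq_imp_eq)
qed

lemma cnorm_eq_0: "cnorm n w = 0 \<Longrightarrow> r < n \<Longrightarrow> w r = 0"
proof -
  assume v: "cnorm n w = 0" and r: "r < n"
  have "(\<Sum>r<n. (cmod (w r))\<^sup>2) = 0" using v by (simp add: cnorm_def sum_nonneg)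
  then have "\<forall>r\<in>{..<n}. (cmod (w r))\<^sup>2 = 0" by (subst (asm) sum_nonneg_eq_0_iff) auto
  then show "w r = 0" using r by simp
qed

definition gs_regular :: "nat \<Rightarrow> nat \<Rightarrow> (nat \<Rightarrow> nat \<Rightarrow> complex) \<Rightarrow> bool" where
  "gs_regular n p a \<longleftrightarrow> (\<forall>m<p. 0 < cnorm n (gs_residual n a m))"

definition gs_Q :: "nat \<Rightarrow> nat \<Rightarrow> (nat \<Rightarrow> nat \<Rightarrow> complex) \<Rightarrow> complex mat" where
  "gs_Q n p a = mat n p (\<lambda>(i, m). gs_col n a m i)"

definition gs_R :: "nat \<Rightarrow> nat \<Rightarrow> (nat \<Rightarrow> nat \<Rightarrow> complex) \<Rightarrow> complex mat" where
  "gs_R n p a = mat p p (\<lambda>(m, j). cinner n (gs_col n a m) (\<lambda>r. a r j))"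

lemma gs_Q_carrier [simp]: "gs_Q n p a \<in> carrier_mat n p"
  by (simp add: gs_Q_def)

lemma gs_R_carrier [simp]: "gs_R n p a \<in> carrier_mat p p"
  by (simp add: gs_R_def)

lemma gs_Q_dims [simp]: "dim_row (gs_Q n p a) = n" "dim_col (gs_Q n p a) = p"
  by (simp_all add: gs_Q_def)

lemma gs_R_dims [simp]: "dim_row (gs_R n p a) = p" "dim_col (gs_R n p a) = p"
  by (simp_all add: gs_R_def)

context
  fixes n p :: nat and a :: "nat \<Rightarrow> nat \<Rightarrow> complex"
  assumes regular: "gs_regular n p a"
begin

lemma gs_residual_pos: "m < p \<Longrightarrow> 0 < cnorm n (gs_residual n a m)"
  using regular by (simp add: gs_regular_def)

lemma cinner_gs_col_self:
  assumes j: "j < p"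
  shows "cinner n (gs_col n a j) (gs_col n a j) = 1"
proof -
  let ?w = "gs_residual n a j" and ?N = "cnorm n (gs_residual n a j)"
  have g: "gs_col n a j = (\<lambda>i. ?w i / of_real ?N)" by (rule ext) (rule gs_col_eq)
  have "cinner n (gs_col n a j) (gs_col n a j) = cinner n ?w ?w / (of_real ?N * of_real ?N)"
    unfolding g cinner_divide_left cinner_divide_right by simp
  also have "\<dots> = 1" using gs_residual_pos[OF j] by (simp add: cinner_self power2_eq_square)
  finally show ?thesis .
qed

lemma cinner_gs_col_earlier:
  "j < p \<Longrightarrow> m < j \<Longrightarrow> cinner n (gs_col n a m) (gs_col n a j) = 0"
proof (induction j arbitrary: m rule: less_induct)
  case (less j)
  let ?q = "gs_col n a"
  have orth: "cinner n (?q m) (?q m') = (if m' = m then 1 else 0)" if "m' < j" for m'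
  proof (cases m' m rule: linorder_cases)
    case less
    then show ?thesis using less.IH[of m m'] less.prems by (subst cinner_cnj) simp
  next
    case equal
    then show ?thesis using cinner_gs_col_self less.prems by simp
  next
    case greater
    then show ?thesis using less.IH[of m' m] less.prems that by simp
  qed
  have "cinner n (?q m) (gs_residual n a j) = cinner n (?q m) (\<lambda>r. a r j) -
      (\<Sum>m'<j. cinner n (?q m') (\<lambda>r. a r j) * cinner n (?q m) (?q m'))"
    unfolding gs_residual_def by (rule cinner_diff_sum)
  also have "\<dots> = 0"
    using less.prems by (simp add: orth if_distrib[of "(*) _"] cong: if_cong)
  finally show ?case by (simp add: gs_col_eq[abs_def] cinner_divide_right)
qed

lemma gs_col_orthonormal:
  assumes "m < p" "m' < p"
  shows "cinner n (gs_col n a m) (gs_col n a m') = (if m = m' then 1 else 0)"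
proof (cases m m' rule: linorder_cases)
  case greater
  then show ?thesis using cinner_gs_col_earlier[of m m'] assms by (subst cinner_cnj) simp
qed (use assms cinner_gs_col_self cinner_gs_col_earlier in auto)

lemma cinner_gs_col_same:
  assumes j: "j < p"
  shows "cinner n (gs_col n a j) (\<lambda>r. a r j) = of_real (cnorm n (gs_residual n a j))"
proof -
  let ?q = "gs_col n a" and ?w = "gs_residual n a j" and ?N = "cnorm n (gs_residual n a j)"
  have g: "?q j = (\<lambda>i. ?w i / of_real ?N)" by (rule ext) (rule gs_col_eq)
  have "cinner n (?q j) ?w = cinner n (?q j) (\<lambda>r. a r j) -
        (\<Sum>m'<j. cinner n (?q m') (\<lambda>r. a r j) * cinner n (?q j) (?q m'))"
    unfolding gs_residual_def by (rule cinner_diff_sum)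
  also have "(\<Sum>m'<j. cinner n (?q m') (\<lambda>r. a r j) * cinner n (?q j) (?q m')) = 0"
    by (intro sum.neutral) (use gs_col_orthonormal j in auto)
  finally have "cinner n (?q j) (\<lambda>r. a r j) = cinner n (?q j) ?w" by simp
  also have "\<dots> = cinner n ?w ?w / of_real ?N" unfolding g cinner_divide_left by simp
  also have "\<dots> = of_real ?N" using gs_residual_pos[OF j] by (simp add: cinner_self power2_eq_square)
  finally show ?thesis .
qed

lemma gs_col_expansion:
  assumes j: "j < p" and i: "i < n"
  shows "a i j = (\<Sum>m<Suc j. cinner n (gs_col n a m) (\<lambda>r. a r j) * gs_col n a m i)"
proof -
  let ?q = "gs_col n a" and ?w = "gs_residual n a j" and ?N = "cnorm n (gs_residual n a j)"
  have "?w i = of_real ?N * ?q j i" using gs_residual_pos[OF j] gs_col_eq[of n a j i] by simp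
  then have "a i j = (\<Sum>m<j. cinner n (?q m) (\<lambda>r. a r j) * ?q m i) + of_real ?N * ?q j i"
    unfolding gs_residual_def by (simp add: algebra_simps)
  then show ?thesis using cinner_gs_col_same[OF j] by simp
qed

lemma cinner_gs_col_later:
  assumes j: "j < p" and m: "m < p" and jm: "j < m"
  shows "cinner n (gs_col n a m) (\<lambda>r. a r j) = 0"
proof -
  let ?q = "gs_col n a"
  have "cinner n (?q m) (\<lambda>r. a r j) = cinner n (?q m) (\<lambda>r. (\<Sum>m'<Suc j. cinner n (?q m') (\<lambda>r. a r j) * ?q m' r))"
    by (rule cinner_cong) (use gs_col_expansion[OF j] in blast)
  also have "\<dots> = (\<Sum>m'<Suc j. cinner n (?q m') (\<lambda>r. a r j) * cinner n (?q m) (?q m'))"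
    by (rule cinner_sum)
  also have "\<dots> = 0" by (intro sum.neutral) (use gs_col_orthonormal j m jm in auto)
  finally show ?thesis .
qed

lemma gs_col_expansion_full:
  assumes j: "j < p" and i: "i < n"
  shows "a i j = (\<Sum>m<p. gs_col n a m i * cinner n (gs_col n a m) (\<lambda>r. a r j))"
proof -
  have "a i j = (\<Sum>m<Suc j. cinner n (gs_col n a m) (\<lambda>r. a r j) * gs_col n a m i)"
    by (rule gs_col_expansion[OF j i])
  also have "\<dots> = (\<Sum>m<p. cinner n (gs_col n a m) (\<lambda>r. a r j) * gs_col n a m i)"
    by (rule sum.mono_neutral_left) (use j cinner_gs_col_later[OF j] in auto)
  finally show ?thesis by (simp add: mult.commute)
qed

lemma gs_Q_orthonormal: "mat_adjoint (gs_Q n p a) * gs_Q n p a = 1\<^sub>m p"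
proof (rule eq_matI)
  fix i j assume "i < dim_row (1\<^sub>m p :: complex mat)" "j < dim_col (1\<^sub>m p :: complex mat)"
  then have i: "i < p" and j: "j < p" by auto
  have "(mat_adjoint (gs_Q n p a) * gs_Q n p a) $$ (i, j) = cinner n (gs_col n a i) (gs_col n a j)"
    using index_mat_adjoint_mult[OF gs_Q_carrier[of n p a] gs_Q_carrier[of n p a] i j] i j
    by (simp add: gs_Q_def cinner_def)
  then show "(mat_adjoint (gs_Q n p a) * gs_Q n p a) $$ (i, j) = (1\<^sub>m p :: complex mat) $$ (i, j)"
    using gs_col_orthonormal[OF i j] i j by simp
qed (auto simp: gs_Q_def)

lemma gs_Q_mult_gs_R: "gs_Q n p a * gs_R n p a = mat n p (\<lambda>(i, j). a i j)"
proof (rule eq_matI)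
  fix i j assume "i < dim_row (mat n p (\<lambda>(i, j). a i j))" "j < dim_col (mat n p (\<lambda>(i, j). a i j))"
  then have i: "i < n" and j: "j < p" by auto
  show "(gs_Q n p a * gs_R n p a) $$ (i, j) = mat n p (\<lambda>(i, j). a i j) $$ (i, j)"
    using index_mult_mat_lessThan[OF gs_Q_carrier gs_R_carrier i j] gs_col_expansion_full[OF j i] i j
    by (simp add: gs_Q_def gs_R_def)
qed auto

lemma mat_adjoint_gs_Q_mult: "mat_adjoint (gs_Q n p a) * mat n p (\<lambda>(i, j). a i j) = gs_R n p a"
proof (rule eq_matI)
  fix i j assume "i < dim_row (gs_R n p a)" "j < dim_col (gs_R n p a)"
  then have i: "i < p" and j: "j < p" by auto
  show "(mat_adjoint (gs_Q n p a) * mat n p (\<lambda>(i, j). a i j)) $$ (i, j) = gs_R n p a $$ (i, j)"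
    using index_mat_adjoint_mult[OF gs_Q_carrier[of n p a] mat_carrier[of n p "\<lambda>(i, j). a i j"] i j] i j
    by (simp add: gs_Q_def gs_R_def cinner_def)
qed auto

lemma upper_triangular_gs_R: "upper_triangular (gs_R n p a)"
  unfolding upper_triangular_def using cinner_gs_col_later by (auto simp: gs_R_def)

lemma gs_R_diag: "j < p \<Longrightarrow> gs_R n p a $$ (j, j) = of_real (cnorm n (gs_residual n a j))"
  using cinner_gs_col_same by (simp add: gs_R_def)

end

lemma gs_col_unique:
  fixes Qf Rf a :: "nat \<Rightarrow> nat \<Rightarrow> complex"
  assumes orth: "\<And>m m'. m < p \<Longrightarrow> m' < p \<Longrightarrow> cinner n (\<lambda>r. Qf r m) (\<lambda>r. Qf r m') = (if m = m' then 1 else 0)"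
    and dec: "\<And>i j. i < n \<Longrightarrow> j < p \<Longrightarrow> a i j = (\<Sum>m<p. Qf i m * Rf m j)"
    and up: "\<And>m j. m < p \<Longrightarrow> j < m \<Longrightarrow> Rf m j = 0"
    and dg: "\<And>j. j < p \<Longrightarrow> Im (Rf j j) = 0 \<and> Re (Rf j j) > 0"
  shows "j < p \<Longrightarrow> cnorm n (gs_residual n a j) > 0 \<and> (\<forall>i<n. gs_col n a j i = Qf i j)"
proof (induction j rule: less_induct)
  case (less j)
  note j = less.prems
  have IH: "\<And>m i. m < j \<Longrightarrow> i < n \<Longrightarrow> gs_col n a m i = Qf i m" using less.IH j by auto
  define \<rho> where "\<rho> = Re (Rf j j)"
  have Rjj: "Rf j j = of_real \<rho>" using dg[OF j] by (simp add: \<rho>_def complex_eq_iff)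
  have rho: "\<rho> > 0" using dg[OF j] by (simp add: \<rho>_def)
  have aj: "a i j = (\<Sum>m<Suc j. Rf m j * Qf i m)" if i: "i < n" for i
  proof -
    have "a i j = (\<Sum>m<p. Qf i m * Rf m j)" by (rule dec[OF i j])
    also have "\<dots> = (\<Sum>m<Suc j. Qf i m * Rf m j)"
      by (rule sum.mono_neutral_right) (use j up in auto)
    finally show ?thesis by (simp add: mult.commute)
  qed
  have ipa: "cinner n (gs_col n a m) (\<lambda>r. a r j) = Rf m j" if m: "m < j" for m
  proof -
    have "cinner n (gs_col n a m) (\<lambda>r. a r j) = cinner n (\<lambda>r. Qf r m) (\<lambda>r. \<Sum>m'<Suc j. Rf m' j * Qf r m')"
      by (rule cinner_cong2) (use IH m aj in auto)
    also have "\<dots> = (\<Sum>m'<Suc j. Rf m' j * cinner n (\<lambda>r. Qf r m) (\<lambda>r. Qf r m'))"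
      by (rule cinner_sum)
    also have "\<dots> = (\<Sum>m'<Suc j. if m' = m then Rf m j else 0)"
      by (intro sum.cong refl) (use orth m j in auto)
    also have "\<dots> = Rf m j" using m by simp
    finally show ?thesis .
  qed
  have w: "gs_residual n a j i = Rf j j * Qf i j" if i: "i < n" for i
  proof -
    have "gs_residual n a j i = a i j - (\<Sum>m<j. Rf m j * Qf i m)"
      unfolding gs_residual_def using IH ipa i by simp
    also have "\<dots> = Rf j j * Qf i j" using aj[OF i] by simp
    finally show ?thesis .
  qed
  have "cinner n (gs_residual n a j) (gs_residual n a j) = cinner n (\<lambda>i. Rf j j * Qf i j) (\<lambda>i. Rf j j * Qf i j)"
    by (rule cinner_cong2) (use w in auto)
  also have "\<dots> = cnj (Rf j j) * Rf j j * cinner n (\<lambda>i. Qf i j) (\<lambda>i. Qf i j)"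
    by (simp add: cinner_def sum_distrib_left mult_ac)
  also have "\<dots> = of_real (\<rho>\<^sup>2)" using orth[OF j j] Rjj by (simp add: power2_eq_square)
  finally have N: "cnorm n (gs_residual n a j) = \<rho>" by (rule cnorm_eqI) (use rho in simp)
  show ?case
  proof (intro conjI allI impI)
    show "cnorm n (gs_residual n a j) > 0" using N rho by simp
    fix i assume i: "i < n"
    show "gs_col n a j i = Qf i j" using gs_col_eq[of n a j i] N w[OF i] Rjj rho by simp
  qed
qed

definition entries :: "complex mat \<Rightarrow> nat \<Rightarrow> nat \<Rightarrow> complex" where
  "entries M = (\<lambda>i j. M $$ (i, j))"

lemma mat_entries: "M \<in> carrier_mat n p \<Longrightarrow> mat n p (\<lambda>(i, j). entries M i j) = M"
  by (rule eq_matI) (auto simp: entries_def)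

lemma qr_unique:
  assumes Q: "Q \<in> carrier_mat n p" and R: "R \<in> carrier_mat p p"
    and QQ: "mat_adjoint Q * Q = 1\<^sub>m p" and Ru: "upper_triangular R"
    and Rd: "\<And>j. j < p \<Longrightarrow> Im (R $$ (j, j)) = 0 \<and> Re (R $$ (j, j)) > 0"
    and QR: "Q * R = M"
  shows "gs_regular n p (entries M)" and "Q = gs_Q n p (entries M)"
proof -
  have orth: "cinner n (\<lambda>r. Q $$ (r, m)) (\<lambda>r. Q $$ (r, m')) = (if m = m' then 1 else 0)"
    if "m < p" "m' < p" for m m'
  proof -
    have "(mat_adjoint Q * Q) $$ (m, m') = cinner n (\<lambda>r. Q $$ (r, m)) (\<lambda>r. Q $$ (r, m'))"
      using index_mat_adjoint_mult[OF Q Q that] by (simp add: cinner_def)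
    then show ?thesis using QQ that by simp
  qed
  have dec: "entries M i j = (\<Sum>m<p. Q $$ (i, m) * R $$ (m, j))" if "i < n" "j < p" for i j
    using QR that Q R by (auto simp: entries_def index_mult_mat_lessThan[OF Q R])
  have up: "R $$ (m, j) = 0" if "m < p" "j < m" for m j
    using Ru that R unfolding upper_triangular_def by auto
  note U = gs_col_unique[where Qf="\<lambda>i m. Q $$ (i, m)" and Rf="\<lambda>m j. R $$ (m, j)" and a="entries M",
      OF orth dec up Rd]
  show "gs_regular n p (entries M)" using U by (auto simp: gs_regular_def)
  show "Q = gs_Q n p (entries M)"
    by (rule eq_matI) (use U Q in \<open>auto simp: gs_Q_def\<close>)
qed

lemma gs_cong:
  assumes ab: "\<And>i j. i < n \<Longrightarrow> j < p \<Longrightarrow> a i j = b i j"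
  shows "j < p \<Longrightarrow> \<forall>i<n. gs_residual n a j i = gs_residual n b j i \<and> gs_col n a j i = gs_col n b j i"
proof (induction j rule: less_induct)
  case (less j)
  have IH: "\<And>m i. m < j \<Longrightarrow> i < n \<Longrightarrow> gs_col n a m i = gs_col n b m i" using less by auto
  have "cinner n (gs_col n a m) (\<lambda>r. a r j) = cinner n (gs_col n b m) (\<lambda>r. b r j)" if "m < j" for m
    by (rule cinner_cong2) (use IH that ab less.prems in auto)
  then have w: "gs_residual n a j i = gs_residual n b j i" if "i < n" for i
    unfolding gs_residual_def using IH that ab less.prems by simp
  then have "cnorm n (gs_residual n a j) = cnorm n (gs_residual n b j)" by (rule cnorm_cong)
  then show ?case using w by (simp add: gs_col_eq)
qed

lemma gs_regular_cong:
  assumes "\<And>i j. i < n \<Longrightarrow> j < p \<Longrightarrow> a i j = b i j"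
  shows "gs_regular n p a = gs_regular n p b"
proof -
  have "cnorm n (gs_residual n a m) = cnorm n (gs_residual n b m)" if "m < p" for m
    using gs_cong[OF assms that] by (intro cnorm_cong) auto
  then show ?thesis by (simp add: gs_regular_def)
qed

lemma gs_Q_cong:
  assumes "\<And>i j. i < n \<Longrightarrow> j < p \<Longrightarrow> a i j = b i j"
  shows "gs_Q n p a = gs_Q n p b"
  by (rule eq_matI) (use gs_cong[OF assms] in \<open>auto simp: gs_Q_def\<close>)

lemma upper_triangular_invertible:
  fixes R :: "complex mat"
  assumes R: "R \<in> carrier_mat p p" and ut: "upper_triangular R" and nz: "\<And>i. i < p \<Longrightarrow> R $$ (i,i) \<noteq> 0"
  shows "\<exists>Y. Y \<in> carrier_mat p p \<and> R * Y = 1\<^sub>m p \<and> Y * R = 1\<^sub>m p"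
proof -
  have "det R = prod_list (diag_mat R)" by (rule det_upper_triangular[OF ut R])
  also have "\<dots> \<noteq> 0" using nz R by (auto simp: prod_list_zero_iff diag_mat_def)
  finally have "R \<in> Units (ring_mat TYPE(complex) p ())" by (rule det_non_zero_imp_unit[OF R])
  then show ?thesis by (auto simp: Units_def ring_mat_def)
qed

lemma gs_residual_eq_0_dependent:
  assumes regular: "gs_regular n j a" and zero: "cnorm n (gs_residual n a j) = 0"
  obtains y where "\<And>i. i < n \<Longrightarrow> a i j = (\<Sum>m<j. a i m * y m)"
proof -
  define A where "A = mat n j (\<lambda>(i, m). a i m)"
  define c where "c = mat j 1 (\<lambda>(m, _). cinner n (gs_col n a m) (\<lambda>r. a r j))"
  have cA: "A \<in> carrier_mat n j" and cc: "c \<in> carrier_mat j 1" by (auto simp: A_def c_def)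
  have Rnz: "gs_R n j a $$ (m, m) \<noteq> 0" if "m < j" for m
    using gs_R_diag[OF regular that] gs_residual_pos[OF regular that] by simp
  obtain Y where cY: "Y \<in> carrier_mat j j" and RY: "gs_R n j a * Y = 1\<^sub>m j"
    using upper_triangular_invertible[OF gs_R_carrier upper_triangular_gs_R[OF regular] Rnz] by blast
  have "A * Y = gs_Q n j a * gs_R n j a * Y" using gs_Q_mult_gs_R[OF regular] by (simp add: A_def)
  also have "\<dots> = gs_Q n j a"
    using assoc_mult_mat[OF gs_Q_carrier gs_R_carrier cY] RY right_mult_one_mat[OF gs_Q_carrier] by simp
  finally have AY: "A * Y = gs_Q n j a" .
  have "a i j = (\<Sum>m<j. a i m * (Y * c) $$ (m, 0))" if i: "i < n" for i
  proof -
    have "a i j = (\<Sum>m<j. cinner n (gs_col n a m) (\<lambda>r. a r j) * gs_col n a m i)"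
      using cnorm_eq_0[OF zero i] by (simp add: gs_residual_def)
    also have "\<dots> = (gs_Q n j a * c) $$ (i, 0)"
      using index_mult_mat_lessThan[OF gs_Q_carrier cc i, of 0] i by (simp add: gs_Q_def c_def mult.commute)
    also have "\<dots> = (A * (Y * c)) $$ (i, 0)" using assoc_mult_mat[OF cA cY cc] AY by simp
    finally show ?thesis
      using i index_mult_mat_lessThan[OF cA mult_carrier_mat[OF cY cc] i, of 0] by (simp add: A_def)
  qed
  then show ?thesis by (rule that)
qed

lemma gs_regular_if_inj:
  assumes inj: "\<And>x. \<forall>i<n. (\<Sum>m<p. a i m * x m) = 0 \<Longrightarrow> \<forall>m<p. x m = 0"
  shows "gs_regular n p a"
proof -
  have "0 < cnorm n (gs_residual n a j)" if "j < p" for j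
    using that
  proof (induction j rule: less_induct)
    case (less j)
    have regular: "gs_regular n j a" using less by (simp add: gs_regular_def)
    show ?case
    proof (rule ccontr)
      assume "\<not> 0 < cnorm n (gs_residual n a j)"
      then have "cnorm n (gs_residual n a j) = 0" using cnorm_nonneg[of n "gs_residual n a j"] by simp
      then obtain y where y: "\<And>i. i < n \<Longrightarrow> a i j = (\<Sum>m<j. a i m * y m)"
        using gs_residual_eq_0_dependent[OF regular] by blast
      define x where "x = (\<lambda>m. if m < j then y m else if m = j then -1 else 0)"
      have "(\<Sum>m<p. a i m * x m) = 0" if i: "i < n" for i
      proof -
        have "(\<Sum>m<p. a i m * x m) = (\<Sum>m<Suc j. a i m * x m)"
          by (rule sum.mono_neutral_right) (use less.prems in \<open>auto simp: x_def\<close>)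
        also have "\<dots> = 0" using y[OF i] by (simp add: x_def)
        finally show ?thesis .
      qed
      then have "x j = 0" using inj less.prems by blast
      then show False by (simp add: x_def)
    qed
  qed
  then show ?thesis by (simp add: gs_regular_def)
qed

lemma gs_col_cnj:
  "gs_col n (\<lambda>i j. cnj (a i j)) m i = cnj (gs_col n a m i) \<and>
   gs_residual n (\<lambda>i j. cnj (a i j)) m i = cnj (gs_residual n a m i)"
proof (induction m arbitrary: i rule: less_induct)
  case (less m)
  have IH: "\<And>m' i. m' < m \<Longrightarrow> gs_col n (\<lambda>i j. cnj (a i j)) m' i = cnj (gs_col n a m' i)" using less by blast
  have ipc: "cinner n (gs_col n (\<lambda>i j. cnj (a i j)) m') (\<lambda>r. cnj (a r m))
      = cnj (cinner n (gs_col n a m') (\<lambda>r. a r m))"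
    if "m' < m" for m'
    using IH[OF that] by (simp add: cinner_def cnj_sum)
  have w: "gs_residual n (\<lambda>i j. cnj (a i j)) m i = cnj (gs_residual n a m i)" for i
    unfolding gs_residual_def using ipc IH by (simp add: cnj_sum)
  have v: "cnorm n (gs_residual n (\<lambda>i j. cnj (a i j)) m) = cnorm n (gs_residual n a m)"
    unfolding cnorm_def using w by simp
  show ?case using w v by (simp add: gs_col_eq)
qed

lemma gs_Q_map_cnj:
  assumes "M \<in> carrier_mat n p"
  shows "gs_Q n p (entries (map_mat cnj M)) = map_mat cnj (gs_Q n p (entries M))"
proof -
  have "gs_Q n p (entries (map_mat cnj M)) = gs_Q n p (\<lambda>i j. cnj (entries M i j))"
    by (rule gs_Q_cong) (use assms in \<open>simp add: entries_def\<close>)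
  then show ?thesis by (auto intro!: eq_matI simp: gs_Q_def gs_col_cnj)
qed

text \<open>If \<open>K\<^sup>H K = I\<close> and \<open>K\<^sup>H U\<close> is skew-Hermitian, then \<open>x\<^sup>H K\<^sup>H (K + U) x = |x|\<^sup>2 + x\<^sup>H K\<^sup>H U x\<close>
  has real part \<open>|x|\<^sup>2\<close>, so \<open>K + U\<close> is injective.\<close>

lemma stiefel_tangent_inj:
  fixes K U :: "nat \<Rightarrow> nat \<Rightarrow> complex"
  assumes kk: "\<And>a b. a < p \<Longrightarrow> b < p \<Longrightarrow> (\<Sum>r<n. cnj (K r a) * K r b) = (if a = b then 1 else 0)"
    and sk: "\<And>a b. a < p \<Longrightarrow> b < p \<Longrightarrow> (\<Sum>r<n. cnj (K r a) * U r b) + (\<Sum>r<n. cnj (U r a) * K r b) = 0"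
    and hyp: "\<forall>i<n. (\<Sum>m<p. (K i m + U i m) * x m) = 0"
  shows "\<forall>m<p. x m = 0"
proof -
  define S where "S = (\<lambda>a m. \<Sum>i<n. cnj (K i a) * U i m)"
  have row: "x a + (\<Sum>m<p. S a m * x m) = 0" if a: "a < p" for a
  proof -
    have "0 = (\<Sum>i<n. cnj (K i a) * (\<Sum>m<p. (K i m + U i m) * x m))" using hyp by simp
    also have "\<dots> = (\<Sum>m<p. x m * (\<Sum>i<n. cnj (K i a) * (K i m + U i m)))"
      by (rule sum_mult_sum_swap)
    also have "\<dots> = (\<Sum>m<p. x m * ((if a = m then 1 else 0) + S a m))"
      by (intro sum.cong refl) (simp add: distrib_left sum.distrib kk[OF a] S_def)
    also have "\<dots> = x a + (\<Sum>m<p. S a m * x m)"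
      using a by (simp add: distrib_left sum.distrib mult.commute if_distrib[of "(*) _"] cong: if_cong)
    finally show ?thesis by simp
  qed
  have Sc: "cnj (S a m) = - S m a" if "a < p" "m < p" for a m
  proof -
    have "cnj (S a m) = (\<Sum>i<n. cnj (U i m) * K i a)" by (simp add: S_def cnj_sum mult.commute)
    also have "\<dots> = - S m a" using sk[OF that(2) that(1)] by (simp add: S_def eq_neg_iff_add_eq_0 add.commute)
    finally show ?thesis .
  qed
  define z where "z = (\<Sum>a<p. cnj (x a) * (\<Sum>m<p. S a m * x m))"
  have "cnj z = (\<Sum>a<p. x a * (\<Sum>m<p. - S m a * cnj (x m)))"
    unfolding z_def by (simp add: cnj_sum Sc)
  also have "\<dots> = (\<Sum>m<p. cnj (x m) * (\<Sum>a<p. - S m a * x a))"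
    by (subst sum_mult_sum_swap) (simp add: mult_ac)
  also have "\<dots> = - z" unfolding z_def by (simp add: sum_negf)
  finally have zc: "cnj z = - z" .
  then have Rz: "Re z = 0" by (simp add: complex_eq_iff)
  have "(\<Sum>a<p. cnj (x a) * (x a + (\<Sum>m<p. S a m * x m))) = 0" using row by simp
  then have "(\<Sum>a<p. cnj (x a) * x a) + z = 0" by (simp add: z_def distrib_left sum.distrib)
  then have "Re (\<Sum>a<p. cnj (x a) * x a) = 0"
    using Rz by (metis plus_complex.sel(1) zero_complex.sel(1) add_0_right)
  moreover have "Re (\<Sum>a<p. cnj (x a) * x a) = (\<Sum>a<p. (cmod (x a))\<^sup>2)"
    by (simp add: Re_sum cmod_power2 power2_eq_square[symmetric])
  ultimately have "(\<Sum>a<p. (cmod (x a))\<^sup>2) = 0" by simp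
  then have "\<forall>a\<in>{..<p}. (cmod (x a))\<^sup>2 = 0" by (subst (asm) sum_nonneg_eq_0_iff) auto
  then show ?thesis by simp
qed

lemma gs_regular_stiefel_tangent:
  fixes K U :: "complex mat"
  assumes K: "K \<in> carrier_mat n p" and U: "U \<in> carrier_mat n p"
    and KK: "mat_adjoint K * K = 1\<^sub>m p" and skew: "mat_adjoint K * U + mat_adjoint U * K = 0\<^sub>m p p"
  shows "gs_regular n p (entries (K + U))"
proof (rule gs_regular_if_inj)
  fix x assume x: "\<forall>i<n. (\<Sum>m<p. entries (K + U) i m * x m) = 0"
  show "\<forall>m<p. x m = 0"
  proof (rule stiefel_tangent_inj[where K="entries K" and U="entries U"])
    fix a b assume ab: "a < p" "b < p"
    have "(mat_adjoint K * K) $$ (a, b) = (\<Sum>r<n. cnj (K $$ (r, a)) * K $$ (r, b))"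
      by (rule index_mat_adjoint_mult[OF K K ab])
    then show "(\<Sum>r<n. cnj (entries K r a) * entries K r b) = (if a = b then 1 else 0)"
      using KK ab by (simp add: entries_def)
    have "(mat_adjoint K * U + mat_adjoint U * K) $$ (a, b) =
        (\<Sum>r<n. cnj (K $$ (r, a)) * U $$ (r, b)) + (\<Sum>r<n. cnj (U $$ (r, a)) * K $$ (r, b))"
      using index_mat_adjoint_mult[OF K U ab] index_mat_adjoint_mult[OF U K ab] ab K U by simp
    then show "(\<Sum>r<n. cnj (entries K r a) * entries U r b) + (\<Sum>r<n. cnj (entries U r a) * entries K r b) = 0"
      using skew ab by (simp add: entries_def)
  next
    show "\<forall>i<n. (\<Sum>m<p. (entries K i m + entries U i m) * x m) = 0"
      using x K U by (simp add: entries_def)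
  qed
qed

lemma differentiable_Re [derivative_intros]: "f differentiable F \<Longrightarrow> (\<lambda>x. Re (f x)) differentiable F"
  unfolding differentiable_def using bounded_linear.has_derivative[OF bounded_linear_Re] by blast

lemma differentiable_Im [derivative_intros]: "f differentiable F \<Longrightarrow> (\<lambda>x. Im (f x)) differentiable F"
  unfolding differentiable_def using bounded_linear.has_derivative[OF bounded_linear_Im] by blast

lemma differentiable_cnj [derivative_intros]:
  "f differentiable (at x within A) \<Longrightarrow> (\<lambda>z. cnj (f z)) differentiable (at x within A)"
  by (simp add: differentiable_cnj_iff)

lemma differentiable_of_real [derivative_intros]:
  "f differentiable F \<Longrightarrow> (\<lambda>x. of_real (f x) :: 'a::real_normed_algebra_1) differentiable F"
  unfolding differentiable_def using bounded_linear.has_derivative[OF bounded_linear_of_real] by blast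

lemma differentiable_sqrt [derivative_intros]:
  fixes f :: "real \<Rightarrow> real"
  assumes "f differentiable (at x)" and "0 < f x"
  shows "(\<lambda>t. sqrt (f t)) differentiable (at x)"
proof -
  obtain D where "(f has_real_derivative D) (at x)" using assms(1) by (auto simp: real_differentiable_def)
  then have "((\<lambda>t. sqrt (f t)) has_real_derivative inverse (sqrt (f x)) / 2 * D) (at x)"
    by (rule DERIV_chain2[where f=sqrt and g=f, OF DERIV_real_sqrt[OF assms(2)]])
  then show ?thesis by (auto simp: real_differentiable_def)
qed

lemma differentiable_imp_has_vector_derivative:
  fixes f :: "real \<Rightarrow> 'a::real_normed_vector"
  assumes "f differentiable F"
  obtains d where "(f has_vector_derivative d) F"
proof -
  obtain D where D: "(f has_derivative D) F" using assms by (auto simp: differentiable_def)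
  obtain d where "D = (\<lambda>x. x *\<^sub>R d)" using linear_imp_scaleR[OF has_derivative_linear[OF D]] .
  then show ?thesis using D that by (simp add: has_vector_derivative_def)
qed

lemma has_vector_derivative_unique_at:
  assumes "(f has_vector_derivative a) (at x)" and "(f has_vector_derivative b) (at x)"
  shows "a = b"
proof -
  have "(\<lambda>h. h *\<^sub>R a) = (\<lambda>h. h *\<^sub>R b)"
    using assms unfolding has_vector_derivative_def by (rule has_derivative_unique)
  then show ?thesis by (metis scaleR_one)
qed

lemma has_vector_derivative_transform_eventually:
  assumes "(f has_vector_derivative a) (at x)" and "\<forall>\<^sub>F t in nhds x. f t = g t"
  shows "(g has_vector_derivative a) (at x)"
proof -
  have "\<forall>\<^sub>F t in at x. f t = g t" and "f x = g x"
    using assms(2) by (simp_all add: eventually_nhds_conv_at)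
  then show ?thesis
    using assms(1) has_derivative_transform_eventually[of f _ x UNIV g]
    by (simp add: has_vector_derivative_def)
qed

lemma has_vector_derivative_eventually_const:
  assumes "(f has_vector_derivative a) (at x)" and "\<forall>\<^sub>F t in nhds x. f t = c"
  shows "a = 0"
  using has_vector_derivative_transform_eventually[OF assms] has_vector_derivative_const
  by (rule has_vector_derivative_unique_at)

lemma Im_has_vector_derivative_eventually_real:
  assumes "(f has_vector_derivative a) (at x)" and "\<forall>\<^sub>F t in nhds x. Im (f t) = 0"
  shows "Im a = 0"
proof -
  have "((\<lambda>t. Im (f t)) has_vector_derivative Im a) (at x)"
    using has_field_derivative_Im[OF assms(1)] by (simp add: has_real_derivative_iff_has_vector_derivative)
  then show ?thesis using assms(2) by (rule has_vector_derivative_eventually_const)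
qed

lemma eventually_pos_differentiable:
  fixes f :: "real \<Rightarrow> real"
  assumes "f differentiable (at x)" and "0 < f x"
  shows "\<forall>\<^sub>F t in nhds x. 0 < f t"
proof -
  have "(f \<longlongrightarrow> f x) (at x)"
    using assms(1) by (auto simp: differentiable_def isCont_def dest: has_derivative_continuous)
  then have "\<forall>\<^sub>F t in at x. 0 < f t" using assms(2) by (rule order_tendstoD(1))
  then show ?thesis using assms(2) by (simp add: eventually_nhds_conv_at)
qed

definition line_entries ::
    "(nat \<Rightarrow> nat \<Rightarrow> complex) \<Rightarrow> (nat \<Rightarrow> nat \<Rightarrow> complex) \<Rightarrow> real \<Rightarrow> nat \<Rightarrow> nat \<Rightarrow> complex" where
  "line_entries a0 a1 t = (\<lambda>i j. a0 i j + of_real t * a1 i j)"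

lemma line_entries_0 [simp]: "line_entries a0 a1 0 = a0"
  by (simp add: line_entries_def)

lemma has_vector_derivative_line_entries:
  "((\<lambda>t. line_entries a0 a1 t i j) has_vector_derivative a1 i j) (at x)"
proof -
  have "((\<lambda>t. of_real t * a1 i j) has_vector_derivative 1 * a1 i j) (at x)"
    by (rule has_vector_derivative_mult_left) (use has_vector_derivative_of_real[OF DERIV_ident] in simp)
  then show ?thesis
    unfolding line_entries_def
    using has_vector_derivative_add[OF has_vector_derivative_const[of "a0 i j"]] by simp
qed

lemma cnorm_eq_sqrt: "cnorm n w = sqrt (\<Sum>r<n. Re (w r) * Re (w r) + Im (w r) * Im (w r))"
  unfolding cnorm_def by (simp add: cmod_power2 power2_eq_square[symmetric])

lemma differentiable_gs_line:
  assumes regular: "gs_regular n p a0" and m: "m < p"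
  shows "(\<lambda>t. gs_residual n (line_entries a0 a1 t) m i) differentiable (at 0)"
    and "(\<lambda>t. cnorm n (gs_residual n (line_entries a0 a1 t) m)) differentiable (at 0)"
    and "(\<lambda>t. gs_col n (line_entries a0 a1 t) m i) differentiable (at 0)"
proof -
  let ?w = "\<lambda>t m. gs_residual n (line_entries a0 a1 t) m"
  have line: "(\<lambda>t. line_entries a0 a1 t i j) differentiable (at 0)" for i j
    unfolding line_entries_def
    by (intro differentiable_add differentiable_mult differentiable_of_real differentiable_const
        differentiable_ident)
  have "(\<forall>i. (\<lambda>t. ?w t m i) differentiable (at 0)) \<and> (\<lambda>t. cnorm n (?w t m)) differentiable (at 0)
      \<and> (\<forall>i. (\<lambda>t. gs_col n (line_entries a0 a1 t) m i) differentiable (at 0))"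
    using m
  proof (induction m rule: less_induct)
    case (less m)
    have IH: "(\<lambda>t. gs_col n (line_entries a0 a1 t) m' i) differentiable (at 0)" if "m' < m" for m' i
      using less that by auto
    have inner: "(\<lambda>t. cinner n (gs_col n (line_entries a0 a1 t) m') (\<lambda>r. line_entries a0 a1 t r m))
        differentiable (at 0)" if "m' < m" for m'
      unfolding cinner_def
      by (intro differentiable_sum finite_lessThan ballI differentiable_mult differentiable_cnj line IH[OF that])
    have w: "(\<lambda>t. ?w t m i) differentiable (at 0)" for i
      unfolding gs_residual_def
      by (intro differentiable_diff differentiable_sum finite_lessThan ballI differentiable_mult line)
         (auto intro: inner IH)
    have pos: "0 < cnorm n (?w 0 m)" using gs_residual_pos[OF regular less.prems] by simp
    have N: "(\<lambda>t. cnorm n (?w t m)) differentiable (at 0)"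
      using pos unfolding cnorm_eq_sqrt
      by (intro differentiable_sqrt differentiable_sum finite_lessThan ballI differentiable_add differentiable_mult
          differentiable_Re differentiable_Im w) simp_all
    have "(\<lambda>t. gs_col n (line_entries a0 a1 t) m i) differentiable (at 0)" for i
      unfolding gs_col_eq divide_inverse
      using pos by (intro differentiable_mult differentiable_of_real differentiable_inverse w N) auto
    then show ?case using w N by blast
  qed
  then show "(\<lambda>t. ?w t m i) differentiable (at 0)" "(\<lambda>t. cnorm n (?w t m)) differentiable (at 0)"
    "(\<lambda>t. gs_col n (line_entries a0 a1 t) m i) differentiable (at 0)"
    by blast+
qed

lemma eventually_gs_regular_line:
  assumes "gs_regular n p a0"
  shows "\<forall>\<^sub>F t in nhds 0. gs_regular n p (line_entries a0 a1 t)"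
proof -
  have "\<forall>\<^sub>F t in nhds 0. 0 < cnorm n (gs_residual n (line_entries a0 a1 t) m)" if "m < p" for m
    using eventually_pos_differentiable[OF differentiable_gs_line(2)[OF assms that]]
      gs_residual_pos[OF assms that] by simp
  then have "\<forall>\<^sub>F t in nhds 0. \<forall>m\<in>{..<p}. 0 < cnorm n (gs_residual n (line_entries a0 a1 t) m)"
    by (intro eventually_ball_finite) auto
  then show ?thesis by (rule eventually_mono) (simp add: gs_regular_def)
qed

section \<open>The differential of the QR factorisation\<close>

lemma Pskew_skew_plus_upper:
  assumes O: "\<Omega> \<in> carrier_mat p p" and U: "U \<in> carrier_mat p p"
    and skew: "\<And>i j. i < p \<Longrightarrow> j < p \<Longrightarrow> \<Omega> $$ (i, j) = - cnj (\<Omega> $$ (j, i))"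
    and upper: "upper_triangular U" and real: "\<And>i. i < p \<Longrightarrow> Im (U $$ (i, i)) = 0"
  shows "Pskew (\<Omega> + U) = \<Omega>"
proof (rule eq_matI)
  fix i j assume "i < dim_row \<Omega>" "j < dim_col \<Omega>"
  then have i: "i < p" and j: "j < p" using O by auto
  have U0: "U $$ (a, b) = 0" if "b < a" "a < p" for a b
    using upper that U by (auto simp: upper_triangular_def)
  consider "j < i" | "i = j" | "i < j" by linarith
  then show "Pskew (\<Omega> + U) $$ (i, j) = \<Omega> $$ (i, j)"
  proof cases
    case 1
    then show ?thesis using i j O U U0[OF 1 i] by (simp add: Pskew_def)
  next
    case 2
    have "Re (\<Omega> $$ (i, i)) = 0" using skew[OF i i] by (simp add: complex_eq_iff)
    then show ?thesis using 2 i O U real[OF i] by (simp add: Pskew_def complex_eq_iff)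
  next
    case 3
    then show ?thesis using i j O U U0[OF 3 j] skew[OF i j] by (simp add: Pskew_def)
  qed
qed (use O U in \<open>auto simp: Pskew_def\<close>)

lemma index_mult_upper_triangular:
  fixes R Y :: "'a::comm_ring_1 mat"
  assumes R: "R \<in> carrier_mat p p" and Y: "Y \<in> carrier_mat p c" and upper: "upper_triangular R"
    and i: "i < p" and j: "j < c"
  shows "(R * Y) $$ (i, j) = R $$ (i, i) * Y $$ (i, j) + (\<Sum>m\<in>{i<..<p}. R $$ (i, m) * Y $$ (m, j))"
proof -
  let ?f = "\<lambda>m. R $$ (i, m) * Y $$ (m, j)"
  have split: "{..<p} = {..<i} \<union> insert i {i<..<p}" using i by auto
  have "(\<Sum>m<p. ?f m) = (\<Sum>m<i. ?f m) + (\<Sum>m\<in>insert i {i<..<p}. ?f m)"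
    unfolding split by (rule sum.union_disjoint) auto
  also have "(\<Sum>m<i. ?f m) = 0"
    using upper R i by (intro sum.neutral) (auto simp: upper_triangular_def)
  finally show ?thesis using index_mult_mat_lessThan[OF R Y i j] by simp
qed

lemma upper_triangular_right_inverse:
  fixes R Y :: "'a::field mat"
  assumes R: "R \<in> carrier_mat p p" and Y: "Y \<in> carrier_mat p p"
    and upper: "upper_triangular R" and nonzero: "\<And>i. i < p \<Longrightarrow> R $$ (i, i) \<noteq> 0"
    and RY: "R * Y = 1\<^sub>m p"
  shows "upper_triangular Y" and "\<And>i. i < p \<Longrightarrow> Y $$ (i, i) = inverse (R $$ (i, i))"
proof -
  have lower0: "Y $$ (i, j) = 0" if "i < p" "j < i" for i j
    using that
  proof (induction "p - i" arbitrary: i rule: less_induct)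
    case less
    have "(\<Sum>m\<in>{i<..<p}. R $$ (i, m) * Y $$ (m, j)) = 0"
      using less by (intro sum.neutral) auto
    moreover have "(R * Y) $$ (i, j) = 0" using RY less.prems by simp
    ultimately have "R $$ (i, i) * Y $$ (i, j) = 0"
      using index_mult_upper_triangular[OF R Y upper less.prems(1), of j] less.prems by simp
    then show ?case using nonzero[OF less.prems(1)] by simp
  qed
  then show "upper_triangular Y" using Y by (auto simp: upper_triangular_def)
  fix i assume i: "i < p"
  have "(\<Sum>m\<in>{i<..<p}. R $$ (i, m) * Y $$ (m, i)) = 0" using lower0 by (intro sum.neutral) auto
  then have "R $$ (i, i) * Y $$ (i, i) = 1"
    using index_mult_upper_triangular[OF R Y upper i i] RY i by simp
  then show "Y $$ (i, i) = inverse (R $$ (i, i))" using nonzero[OF i] by (simp add: field_simps)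
qed

lemma upper_triangular_mult:
  fixes E Y :: "'a::comm_ring_1 mat"
  assumes E: "E \<in> carrier_mat p p" and Y: "Y \<in> carrier_mat p p"
    and Eu: "upper_triangular E" and Yu: "upper_triangular Y"
  shows "upper_triangular (E * Y)" and "\<And>i. i < p \<Longrightarrow> (E * Y) $$ (i, i) = E $$ (i, i) * Y $$ (i, i)"
proof -
  have Y0: "Y $$ (m, j) = 0" if "j < m" "m < p" for m j
    using Yu that Y by (auto simp: upper_triangular_def)
  have "(E * Y) $$ (i, j) = 0" if "i < p" "j < i" for i j
    using index_mult_upper_triangular[OF E Y Eu that(1), of j] that Y0 by (simp add: sum.neutral)
  then show "upper_triangular (E * Y)" using E by (auto simp: upper_triangular_def)
  show "(E * Y) $$ (i, i) = E $$ (i, i) * Y $$ (i, i)" if "i < p" for i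
    using index_mult_upper_triangular[OF E Y Eu that that] that Y0 by (simp add: sum.neutral)
qed

lemma mat_adjoint_mult_skew:
  fixes Q D :: "complex mat"
  assumes Q: "Q \<in> carrier_mat n p" and D: "D \<in> carrier_mat n p"
    and skew: "mat_adjoint Q * D + mat_adjoint D * Q = 0\<^sub>m p p" and i: "i < p" and j: "j < p"
  shows "(mat_adjoint Q * D) $$ (i, j) = - cnj ((mat_adjoint Q * D) $$ (j, i))"
proof -
  have "mat_adjoint (mat_adjoint Q * D) = mat_adjoint D * Q"
    using mat_adjoint_mult[OF mat_adjoint_carrier[OF Q] D] by (simp add: mat_adjoint_mat_adjoint)
  then have "(mat_adjoint Q * D + mat_adjoint (mat_adjoint Q * D)) $$ (i, j) = 0"
    using skew i j by simp
  then show ?thesis using i j Q D by (simp add: eq_neg_iff_add_eq_0)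
qed

lemma qr_differential_components:
  fixes Q D A1 R E Y :: "complex mat"
  assumes Q: "Q \<in> carrier_mat n p" and D: "D \<in> carrier_mat n p"
    and R: "R \<in> carrier_mat p p" and E: "E \<in> carrier_mat p p" and Y: "Y \<in> carrier_mat p p"
    and QQ: "mat_adjoint Q * Q = 1\<^sub>m p" and dec: "D * R + Q * E = A1" and RY: "R * Y = 1\<^sub>m p"
  shows "mat_adjoint Q * (A1 * Y) = mat_adjoint Q * D + E * Y"
    and "(1\<^sub>m n - Q * mat_adjoint Q) * (A1 * Y) = D - Q * (mat_adjoint Q * D)"
proof -
  have aQ: "mat_adjoint Q \<in> carrier_mat p n" using Q by simp
  have EY: "E * Y \<in> carrier_mat p p" using E Y by simp
  have P: "1\<^sub>m n - Q * mat_adjoint Q \<in> carrier_mat n n" using Q aQ by (simp add: minus_carrier_mat)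
  have AY: "A1 * Y = D + Q * (E * Y)"
  proof -
    have "A1 * Y = D * R * Y + Q * E * Y"
      unfolding dec[symmetric] by (rule add_mult_distrib_mat[of _ n p]) (use D R Q E Y in auto)
    then show ?thesis using assoc_mult_mat[OF D R Y] assoc_mult_mat[OF Q E Y] RY D by simp
  qed
  have "mat_adjoint Q * (A1 * Y) = mat_adjoint Q * D + (mat_adjoint Q * Q) * (E * Y)"
    unfolding AY using assoc_mult_mat[OF aQ Q EY]
    by (simp add: mult_add_distrib_mat[OF aQ D mult_carrier_mat[OF Q EY]])
  then show "mat_adjoint Q * (A1 * Y) = mat_adjoint Q * D + E * Y" using QQ left_mult_one_mat[OF EY] by simp
  have PQ: "(1\<^sub>m n - Q * mat_adjoint Q) * Q = 0\<^sub>m n p"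
    using minus_mult_distrib_mat[of "1\<^sub>m n" n n "Q * mat_adjoint Q" Q p] Q aQ assoc_mult_mat[OF Q aQ Q] QQ
    by simp
  have "(1\<^sub>m n - Q * mat_adjoint Q) * (A1 * Y)
      = (1\<^sub>m n - Q * mat_adjoint Q) * D + ((1\<^sub>m n - Q * mat_adjoint Q) * Q) * (E * Y)"
    unfolding AY using assoc_mult_mat[OF P Q EY]
    by (simp add: mult_add_distrib_mat[OF P D mult_carrier_mat[OF Q EY]])
  also have "\<dots> = D - Q * (mat_adjoint Q * D)"
    using PQ minus_mult_distrib_mat[of "1\<^sub>m n" n n "Q * mat_adjoint Q" D p] Q aQ D EY
      assoc_mult_mat[OF Q aQ D] left_mult_zero_mat[OF EY]
      right_add_zero_mat[OF minus_carrier_mat[OF mult_carrier_mat[OF Q mult_carrier_mat[OF aQ D]]]]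
    by simp
  finally show "(1\<^sub>m n - Q * mat_adjoint Q) * (A1 * Y) = D - Q * (mat_adjoint Q * D)" .
qed

text \<open>Here \<open>D\<close>, \<open>E\<close>, \<open>A1\<close> play the roles of the differentials \<open>Q'\<close>, \<open>R'\<close>, \<open>A'\<close> of \<open>Q R = A\<close>
  and \<open>Y = R\<^sup>-\<^sup>1\<close>. Differentiating \<open>Q\<^sup>H Q = I\<close> makes \<open>\<Omega> = Q\<^sup>H D\<close> skew-Hermitian, while
  \<open>Q\<^sup>H A1 Y = \<Omega> + E Y\<close> with \<open>E Y\<close> upper triangular with real diagonal; so \<open>Pskew\<close> isolates \<open>\<Omega>\<close>.\<close>

lemma qr_differential_eq:
  fixes Q D A1 R E Y :: "complex mat"
  assumes Q: "Q \<in> carrier_mat n p" and D: "D \<in> carrier_mat n p"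
    and R: "R \<in> carrier_mat p p" and E: "E \<in> carrier_mat p p" and Y: "Y \<in> carrier_mat p p"
    and QQ: "mat_adjoint Q * Q = 1\<^sub>m p"
    and skew: "mat_adjoint Q * D + mat_adjoint D * Q = 0\<^sub>m p p"
    and dec: "D * R + Q * E = A1"
    and Eu: "upper_triangular E" and Ed: "\<And>i. i < p \<Longrightarrow> Im (E $$ (i, i)) = 0"
    and Ru: "upper_triangular R" and Rnz: "\<And>i. i < p \<Longrightarrow> R $$ (i, i) \<noteq> 0"
    and Rd: "\<And>i. i < p \<Longrightarrow> Im (R $$ (i, i)) = 0"
    and RY: "R * Y = 1\<^sub>m p"
  shows "D = Q * Pskew (mat_adjoint Q * (A1 * Y)) + (1\<^sub>m n - Q * mat_adjoint Q) * (A1 * Y)"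
proof -
  have Yu: "upper_triangular Y" by (rule upper_triangular_right_inverse(1)[OF R Y Ru Rnz RY])
  have Yd: "Y $$ (i, i) = inverse (R $$ (i, i))" if "i < p" for i
    by (rule upper_triangular_right_inverse(2)[OF R Y Ru Rnz RY that])
  have EY: "E * Y \<in> carrier_mat p p" using E Y by simp
  have "Im ((E * Y) $$ (i, i)) = 0" if "i < p" for i
    using upper_triangular_mult(2)[OF E Y Eu Yu that] Yd[OF that] Ed[OF that] Rd[OF that]
    by (simp add: Im_divide power2_eq_square)
  then have "Pskew (mat_adjoint Q * (A1 * Y)) = mat_adjoint Q * D"
    unfolding qr_differential_components(1)[OF Q D R E Y QQ dec RY]
    by (intro Pskew_skew_plus_upper mat_adjoint_mult_skew[OF Q D skew] upper_triangular_mult(1)[OF E Y Eu Yu])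
       (use Q D EY in auto)
  moreover have "mat_adjoint Q * D \<in> carrier_mat p p" by (rule mult_carrier_mat[OF mat_adjoint_carrier[OF Q] D])
  ultimately show ?thesis
    unfolding qr_differential_components(2)[OF Q D R E Y QQ dec RY] using Q D
    by (intro eq_matI) auto
qed

definition gs_col_deriv :: "nat \<Rightarrow> (nat \<Rightarrow> nat \<Rightarrow> complex) \<Rightarrow> (nat \<Rightarrow> nat \<Rightarrow> complex) \<Rightarrow> nat \<Rightarrow> nat \<Rightarrow> complex" where
  "gs_col_deriv n a0 a1 m i =
     (SOME d. ((\<lambda>t. gs_col n (line_entries a0 a1 t) m i) has_vector_derivative d) (at 0))"

definition gs_dQ :: "nat \<Rightarrow> nat \<Rightarrow> (nat \<Rightarrow> nat \<Rightarrow> complex) \<Rightarrow> (nat \<Rightarrow> nat \<Rightarrow> complex) \<Rightarrow> complex mat" where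
  "gs_dQ n p a0 a1 = mat n p (\<lambda>(i, m). gs_col_deriv n a0 a1 m i)"

text \<open>The derivative of \<open>gs_R\<close> along the line, by the product rule.\<close>

definition gs_dR :: "nat \<Rightarrow> nat \<Rightarrow> (nat \<Rightarrow> nat \<Rightarrow> complex) \<Rightarrow> (nat \<Rightarrow> nat \<Rightarrow> complex) \<Rightarrow> complex mat" where
  "gs_dR n p a0 a1 = mat p p (\<lambda>(m, j).
     \<Sum>r<n. cnj (gs_col n a0 m r) * a1 r j + cnj (gs_col_deriv n a0 a1 m r) * a0 r j)"

lemma gs_dQ_carrier [simp]: "gs_dQ n p a0 a1 \<in> carrier_mat n p"
  by (simp add: gs_dQ_def)

lemma gs_dR_carrier [simp]: "gs_dR n p a0 a1 \<in> carrier_mat p p"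
  by (simp add: gs_dR_def)

lemma gs_dQ_dims [simp]: "dim_row (gs_dQ n p a0 a1) = n" "dim_col (gs_dQ n p a0 a1) = p"
  by (simp_all add: gs_dQ_def)

lemma gs_dR_dims [simp]: "dim_row (gs_dR n p a0 a1) = p" "dim_col (gs_dR n p a0 a1) = p"
  by (simp_all add: gs_dR_def)

context
  fixes n p :: nat and a0 a1 :: "nat \<Rightarrow> nat \<Rightarrow> complex"
  assumes regular: "gs_regular n p a0"
begin

lemma has_vector_derivative_gs_col:
  assumes "m < p"
  shows "((\<lambda>t. gs_col n (line_entries a0 a1 t) m i) has_vector_derivative gs_col_deriv n a0 a1 m i) (at 0)"
proof -
  obtain d where "((\<lambda>t. gs_col n (line_entries a0 a1 t) m i) has_vector_derivative d) (at 0)"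
    using differentiable_gs_line(3)[OF regular assms] by (rule differentiable_imp_has_vector_derivative)
  then show ?thesis unfolding gs_col_deriv_def by (rule someI)
qed

lemma has_vector_derivative_gs_R:
  assumes "m < p" "j < p"
  shows "((\<lambda>t. cinner n (gs_col n (line_entries a0 a1 t) m) (\<lambda>r. line_entries a0 a1 t r j))
      has_vector_derivative gs_dR n p a0 a1 $$ (m, j)) (at 0)"
proof -
  have "((\<lambda>t. \<Sum>r<n. cnj (gs_col n (line_entries a0 a1 t) m r) * line_entries a0 a1 t r j)
      has_vector_derivative (\<Sum>r<n. cnj (gs_col n (line_entries a0 a1 0) m r) * a1 r j
        + cnj (gs_col_deriv n a0 a1 m r) * line_entries a0 a1 0 r j)) (at 0)"
    by (intro has_vector_derivative_sum has_vector_derivative_mult has_vector_derivative_cnj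
        has_vector_derivative_gs_col has_vector_derivative_line_entries assms(1))
  then show ?thesis using assms by (simp add: cinner_def gs_dR_def)
qed

lemma gs_dQ_skew:
  "mat_adjoint (gs_Q n p a0) * gs_dQ n p a0 a1 + mat_adjoint (gs_dQ n p a0 a1) * gs_Q n p a0 = 0\<^sub>m p p"
proof (rule eq_matI)
  fix m m' assume "m < dim_row (0\<^sub>m p p :: complex mat)" "m' < dim_col (0\<^sub>m p p :: complex mat)"
  then have m: "m < p" and m': "m' < p" by auto
  let ?q = "\<lambda>t m. gs_col n (line_entries a0 a1 t) m"
  have "((\<lambda>t. cinner n (?q t m) (?q t m')) has_vector_derivative
      (\<Sum>r<n. cnj (?q 0 m r) * gs_col_deriv n a0 a1 m' r + cnj (gs_col_deriv n a0 a1 m r) * ?q 0 m' r))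
      (at 0)"
    unfolding cinner_def
    by (intro has_vector_derivative_sum has_vector_derivative_mult has_vector_derivative_cnj
        has_vector_derivative_gs_col m m')
  moreover have "\<forall>\<^sub>F t in nhds 0. cinner n (?q t m) (?q t m') = (if m = m' then 1 else 0)"
    using eventually_gs_regular_line[OF regular, of a1] by eventually_elim (use gs_col_orthonormal m m' in blast)
  ultimately have "(\<Sum>r<n. cnj (?q 0 m r) * gs_col_deriv n a0 a1 m' r
      + cnj (gs_col_deriv n a0 a1 m r) * ?q 0 m' r) = 0"
    by (rule has_vector_derivative_eventually_const)
  then show "(mat_adjoint (gs_Q n p a0) * gs_dQ n p a0 a1 + mat_adjoint (gs_dQ n p a0 a1) * gs_Q n p a0) $$ (m, m')
      = (0\<^sub>m p p :: complex mat) $$ (m, m')"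
    using m m' index_mat_adjoint_mult[OF gs_Q_carrier[of n p a0] gs_dQ_carrier[of n p a0 a1] m m']
      index_mat_adjoint_mult[OF gs_dQ_carrier[of n p a0 a1] gs_Q_carrier[of n p a0] m m']
    by (simp add: gs_Q_def gs_dQ_def sum.distrib)
qed auto

lemma gs_dQ_decomposition:
  "gs_dQ n p a0 a1 * gs_R n p a0 + gs_Q n p a0 * gs_dR n p a0 a1 = mat n p (\<lambda>(i, j). a1 i j)"
proof (rule eq_matI)
  fix i j assume "i < dim_row (mat n p (\<lambda>(i, j). a1 i j))" "j < dim_col (mat n p (\<lambda>(i, j). a1 i j))"
  then have i: "i < n" and j: "j < p" by auto
  let ?q = "\<lambda>t m. gs_col n (line_entries a0 a1 t) m"
  have "((\<lambda>t. \<Sum>m<p. ?q t m i * cinner n (?q t m) (\<lambda>r. line_entries a0 a1 t r j)) has_vector_derivative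
      (\<Sum>m<p. ?q 0 m i * gs_dR n p a0 a1 $$ (m, j)
        + gs_col_deriv n a0 a1 m i * cinner n (?q 0 m) (\<lambda>r. line_entries a0 a1 0 r j))) (at 0)"
    by (intro has_vector_derivative_sum has_vector_derivative_mult has_vector_derivative_gs_col
        has_vector_derivative_gs_R j) simp_all
  moreover have "\<forall>\<^sub>F t in nhds 0.
      (\<Sum>m<p. ?q t m i * cinner n (?q t m) (\<lambda>r. line_entries a0 a1 t r j)) = line_entries a0 a1 t i j"
    using eventually_gs_regular_line[OF regular, of a1] by eventually_elim (use gs_col_expansion_full i j in metis)
  ultimately have "((\<lambda>t. line_entries a0 a1 t i j) has_vector_derivative
      (\<Sum>m<p. gs_col n a0 m i * gs_dR n p a0 a1 $$ (m, j)
        + gs_col_deriv n a0 a1 m i * cinner n (gs_col n a0 m) (\<lambda>r. a0 r j))) (at 0)"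
    by (simp add: has_vector_derivative_transform_eventually)
  then have "a1 i j = (\<Sum>m<p. gs_col n a0 m i * gs_dR n p a0 a1 $$ (m, j)
      + gs_col_deriv n a0 a1 m i * cinner n (gs_col n a0 m) (\<lambda>r. a0 r j))"
    by (rule has_vector_derivative_unique_at[OF has_vector_derivative_line_entries])
  then show "(gs_dQ n p a0 a1 * gs_R n p a0 + gs_Q n p a0 * gs_dR n p a0 a1) $$ (i, j)
      = mat n p (\<lambda>(i, j). a1 i j) $$ (i, j)"
    using i j index_mult_mat_lessThan[OF gs_dQ_carrier[of n p a0 a1] gs_R_carrier[of n p a0] i j]
      index_mult_mat_lessThan[OF gs_Q_carrier[of n p a0] gs_dR_carrier[of n p a0 a1] i j]
    by (simp add: gs_dQ_def gs_Q_def gs_R_def sum.distrib add.commute)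
qed auto

lemma upper_triangular_gs_dR: "upper_triangular (gs_dR n p a0 a1)"
proof -
  have "gs_dR n p a0 a1 $$ (m, j) = 0" if "m < p" "j < m" for m j
  proof (rule has_vector_derivative_eventually_const[OF has_vector_derivative_gs_R])
    show "\<forall>\<^sub>F t in nhds 0. cinner n (gs_col n (line_entries a0 a1 t) m) (\<lambda>r. line_entries a0 a1 t r j) = 0"
      using eventually_gs_regular_line[OF regular, of a1] by eventually_elim (use cinner_gs_col_later that in auto)
  qed (use that in auto)
  then show ?thesis by (auto simp: upper_triangular_def gs_dR_def)
qed

lemma Im_gs_dR_diag: "j < p \<Longrightarrow> Im (gs_dR n p a0 a1 $$ (j, j)) = 0"
proof (rule Im_has_vector_derivative_eventually_real[OF has_vector_derivative_gs_R])
  assume "j < p"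
  show "\<forall>\<^sub>F t in nhds 0. Im (cinner n (gs_col n (line_entries a0 a1 t) j) (\<lambda>r. line_entries a0 a1 t r j)) = 0"
    using eventually_gs_regular_line[OF regular, of a1] by eventually_elim (use cinner_gs_col_same \<open>j < p\<close> in simp)
qed

theorem has_vector_derivative_gs_col_line:
  assumes Y: "Y \<in> carrier_mat p p" and RY: "gs_R n p a0 * Y = 1\<^sub>m p" and i: "i < n" and m: "m < p"
  defines "Q \<equiv> gs_Q n p a0" and "C \<equiv> mat n p (\<lambda>(i, j). a1 i j) * Y"
  shows "((\<lambda>t. gs_col n (line_entries a0 a1 t) m i) has_vector_derivative
      (Q * Pskew (mat_adjoint Q * C) + (1\<^sub>m n - Q * mat_adjoint Q) * C) $$ (i, m)) (at 0)"
proof -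
  have "gs_dQ n p a0 a1 = Q * Pskew (mat_adjoint Q * C) + (1\<^sub>m n - Q * mat_adjoint Q) * C"
    unfolding Q_def C_def
  proof (rule qr_differential_eq[OF gs_Q_carrier _ gs_R_carrier _ Y
        gs_Q_orthonormal[OF regular] gs_dQ_skew gs_dQ_decomposition upper_triangular_gs_dR Im_gs_dR_diag
        upper_triangular_gs_R[OF regular] _ _ RY])
    fix j assume "j < p"
    then show "gs_R n p a0 $$ (j, j) \<noteq> 0" and "Im (gs_R n p a0 $$ (j, j)) = 0"
      using gs_residual_pos[OF regular \<open>j < p\<close>] by (simp_all add: gs_R_diag[OF regular \<open>j < p\<close>])
  qed (auto simp: gs_dQ_def gs_dR_def)
  then have "gs_col_deriv n a0 a1 m i = (Q * Pskew (mat_adjoint Q * C) + (1\<^sub>m n - Q * mat_adjoint Q) * C) $$ (i, m)"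
    using i m by (metis gs_dQ_def index_mat(1) old.prod.case)
  then show ?thesis using has_vector_derivative_gs_col[OF m, of i] by simp
qed

end

lemma dft_slice_stiefel:
  assumes Q: "Q \<in> Stiefel n p l" and l: "0 < l" and k: "k < l"
  shows "mat_adjoint (dft_slice Q k) * dft_slice Q k = 1\<^sub>m p"
proof -
  have T: "is_tensor n p l Q" using Q by (simp add: Stiefel_def)
  have "dft_slice (ttrans Q \<star> Q) k = mat_adjoint (dft_slice Q k) * dft_slice Q k"
    by (simp add: dft_slice_tprod[OF is_tensor_ttrans[OF T] T l k] dft_slice_ttrans[OF T l k])
  then show ?thesis using Q dft_slice_tid[OF l k] by (simp add: Stiefel_def)
qed

lemma stiefelI:
  assumes Q: "is_tensor n p l Q" and l: "0 < l"
    and orth: "\<And>k. k < l \<Longrightarrow> mat_adjoint (dft_slice Q k) * dft_slice Q k = 1\<^sub>m p"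
  shows "Q \<in> Stiefel n p l"
proof -
  have "ttrans Q \<star> Q = tid p l"
    by (rule dft_slice_eqI[OF is_tensor_tprod[OF is_tensor_ttrans[OF Q] Q l] is_tensor_tid l])
       (simp add: dft_slice_tprod[OF is_tensor_ttrans[OF Q] Q l] dft_slice_ttrans[OF Q l]
          dft_slice_tid[OF l] orth)
  then show ?thesis using Q by (simp add: Stiefel_def)
qed

lemma tqr_dft_slice_unique:
  assumes Q: "Q \<in> Stiefel n p l" and R: "is_tensor p p l R" and QR: "A = Q \<star> R"
    and upper: "\<And>k. k < l \<Longrightarrow> upper_triangular (dft_slice R k)"
    and diag: "\<And>k i. k < l \<Longrightarrow> i < p \<Longrightarrow> Im (dft_slice R k $$ (i, i)) = 0 \<and> 0 < Re (dft_slice R k $$ (i, i))"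
    and l: "0 < l" and k: "k < l"
  shows "gs_regular n p (entries (dft_slice A k))" and "dft_slice Q k = gs_Q n p (entries (dft_slice A k))"
proof -
  have T: "is_tensor n p l Q" using Q by (simp add: Stiefel_def)
  note unique = qr_unique[OF dft_slice_carrier[OF T l k] dft_slice_carrier[OF R l k] dft_slice_stiefel[OF Q l k]
      upper[OF k] diag[OF k] dft_slice_tprod[OF T R l k, folded QR, symmetric]]
  show "gs_regular n p (entries (dft_slice A k))" by (rule unique(1))
  show "dft_slice Q k = gs_Q n p (entries (dft_slice A k))" by (rule unique(2))
qed

lemma ex_tqr:
  assumes A: "is_tensor n p l A" and l: "0 < l"
    and regular: "\<And>k. k < l \<Longrightarrow> gs_regular n p (entries (dft_slice A k))"
  obtains Q where "Q \<in> Stiefel n p l" and "A = Q \<star> (ttrans Q \<star> A)"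
    and "\<And>k. k < l \<Longrightarrow> dft_slice Q k = gs_Q n p (entries (dft_slice A k))"
    and "\<And>k. k < l \<Longrightarrow> dft_slice (ttrans Q \<star> A) k = gs_R n p (entries (dft_slice A k))"
proof -
  have "gs_Q n p (entries (dft_slice A ((l - k) mod l))) = map_mat cnj (gs_Q n p (entries (dft_slice A k)))"
    if "k < l" for k
    unfolding dft_slice_reflect[OF A l that] by (rule gs_Q_map_cnj[OF dft_slice_carrier[OF A l that]])
  then obtain Q where Q: "is_tensor n p l Q"
    and hQ: "\<And>k. k < l \<Longrightarrow> dft_slice Q k = gs_Q n p (entries (dft_slice A k))"
    using ex_tensor_dft_slices[of l "\<lambda>k. gs_Q n p (entries (dft_slice A k))" n p, OF gs_Q_carrier l] by blast
  have St: "Q \<in> Stiefel n p l"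
    by (rule stiefelI[OF Q l]) (simp add: hQ gs_Q_orthonormal[OF regular])
  have hR: "dft_slice (ttrans Q \<star> A) k = gs_R n p (entries (dft_slice A k))" if k: "k < l" for k
    using mat_adjoint_gs_Q_mult[OF regular[OF k]] mat_entries[OF dft_slice_carrier[OF A l k]]
    by (simp add: dft_slice_tprod[OF is_tensor_ttrans[OF Q] A l k] dft_slice_ttrans[OF Q l k] hQ[OF k])
  have AQR: "A = Q \<star> (ttrans Q \<star> A)"
  proof (rule dft_slice_eqI[OF A is_tensor_tprod[OF Q is_tensor_tprod[OF is_tensor_ttrans[OF Q] A l] l] l])
    fix k assume k: "k < l"
    show "dft_slice A k = dft_slice (Q \<star> (ttrans Q \<star> A)) k"
      using gs_Q_mult_gs_R[OF regular[OF k]] mat_entries[OF dft_slice_carrier[OF A l k]]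
      by (simp add: dft_slice_tprod[OF Q is_tensor_tprod[OF is_tensor_ttrans[OF Q] A l] l k] hQ[OF k] hR[OF k])
  qed
  show ?thesis by (rule that[OF St AQR hQ hR])
qed

theorem qf_dft_slice:
  assumes A: "is_tensor n p l A" and l: "0 < l"
    and regular: "\<And>k. k < l \<Longrightarrow> gs_regular n p (entries (dft_slice A k))"
  shows "qf A \<in> Stiefel n p l" and "A = qf A \<star> (ttrans (qf A) \<star> A)"
    and "\<And>k. k < l \<Longrightarrow> dft_slice (qf A) k = gs_Q n p (entries (dft_slice A k))"
    and "\<And>k. k < l \<Longrightarrow> dft_slice (ttrans (qf A) \<star> A) k = gs_R n p (entries (dft_slice A k))"
proof -
  obtain Q where St: "Q \<in> Stiefel n p l" and AQR: "A = Q \<star> (ttrans Q \<star> A)"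
    and hQ: "\<And>k. k < l \<Longrightarrow> dft_slice Q k = gs_Q n p (entries (dft_slice A k))"
    and hR: "\<And>k. k < l \<Longrightarrow> dft_slice (ttrans Q \<star> A) k = gs_R n p (entries (dft_slice A k))"
    using ex_tqr[OF A l regular] by metis
  have QT: "is_tensor n p l Q" using St by (simp add: Stiefel_def)
  have "qf A = Q"
    unfolding qf_def Let_def trows_is_tensor[OF A l] tcols_is_tensor[OF A l] is_tensor_length[OF A]
  proof (rule the_equality)
    have "is_tensor p p l (ttrans Q \<star> A)" by (rule is_tensor_tprod[OF is_tensor_ttrans[OF QT] A l])
    then show "Q \<in> Stiefel n p l \<and> (\<exists>R. is_tensor p p l R \<and> A = Q \<star> R \<and>
        (\<forall>k<l. upper_triangular (tdft (cten R) ! k) \<and>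
          (\<forall>i<p. Im (tdft (cten R) ! k $$ (i, i)) = 0 \<and> 0 < Re (tdft (cten R) ! k $$ (i, i)))))"
      using St AQR upper_triangular_gs_R[OF regular] gs_R_diag[OF regular] gs_residual_pos[OF regular]
      by (intro conjI exI[of _ "ttrans Q \<star> A"]) (auto simp: dft_slice_def[symmetric] hR)
  next
    fix Q' assume "Q' \<in> Stiefel n p l \<and> (\<exists>R. is_tensor p p l R \<and> A = Q' \<star> R \<and>
        (\<forall>k<l. upper_triangular (tdft (cten R) ! k) \<and>
          (\<forall>i<p. Im (tdft (cten R) ! k $$ (i, i)) = 0 \<and> 0 < Re (tdft (cten R) ! k $$ (i, i)))))"
    then obtain R where St': "Q' \<in> Stiefel n p l" and R: "is_tensor p p l R" and QR: "A = Q' \<star> R"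
      and upper: "\<And>k. k < l \<Longrightarrow> upper_triangular (dft_slice R k)"
      and diag: "\<And>k i. k < l \<Longrightarrow> i < p \<Longrightarrow> Im (dft_slice R k $$ (i, i)) = 0 \<and> 0 < Re (dft_slice R k $$ (i, i))"
      by (auto simp: dft_slice_def)
    have "is_tensor n p l Q'" using St' by (simp add: Stiefel_def)
    then show "Q' = Q"
      by (rule dft_slice_eqI[OF _ QT l]) (simp add: tqr_dft_slice_unique(2)[OF St' R QR upper diag l] hQ)
  qed
  then show "qf A \<in> Stiefel n p l" "A = qf A \<star> (ttrans (qf A) \<star> A)"
    "\<And>k. k < l \<Longrightarrow> dft_slice (qf A) k = gs_Q n p (entries (dft_slice A k))"
    "\<And>k. k < l \<Longrightarrow> dft_slice (ttrans (qf A) \<star> A) k = gs_R n p (entries (dft_slice A k))"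
    using St AQR hQ hR by simp_all
qed

lemma inverse_mat_unique:
  fixes W Y1 Y2 :: "'a::comm_ring_1 mat"
  assumes W: "W \<in> carrier_mat p p" and Y1: "Y1 \<in> carrier_mat p p" and Y2: "Y2 \<in> carrier_mat p p"
    and WY: "W * Y1 = 1\<^sub>m p" and YW: "Y2 * W = 1\<^sub>m p"
  shows "Y1 = Y2"
proof -
  have "Y2 = Y2 * (W * Y1)" using WY Y2 by simp
  also have "\<dots> = (Y2 * W) * Y1" using assoc_mult_mat[OF Y2 W Y1] by simp
  also have "\<dots> = Y1" using YW Y1 by simp
  finally show ?thesis by simp
qed

theorem tinv_dft_slice:
  assumes W: "is_tensor p p l W" and l: "0 < l"
    and inv: "\<And>k. k < l \<Longrightarrow> \<exists>Y \<in> carrier_mat p p. dft_slice W k * Y = 1\<^sub>m p \<and> Y * dft_slice W k = 1\<^sub>m p"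
  shows "is_tensor p p l (tinv W)" and "\<And>k. k < l \<Longrightarrow> dft_slice W k * dft_slice (tinv W) k = 1\<^sub>m p"
proof -
  define Y where "Y k = (SOME Y. Y \<in> carrier_mat p p \<and> dft_slice W k * Y = 1\<^sub>m p \<and> Y * dft_slice W k = 1\<^sub>m p)"
    for k
  have Y: "Y k \<in> carrier_mat p p" "dft_slice W k * Y k = 1\<^sub>m p" "Y k * dft_slice W k = 1\<^sub>m p"
    if "k < l" for k
    using someI_ex[OF inv[OF that, unfolded Bex_def]] by (simp_all add: Y_def)
  have "Y ((l - k) mod l) = map_mat cnj (Y k)" if k: "k < l" for k
  proof -
    have lk: "(l - k) mod l < l" using l by simp
    have "map_mat cnj (1\<^sub>m p :: complex mat) = 1\<^sub>m p" by (rule eq_matI) auto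
    then have "map_mat cnj (Y k) * dft_slice W ((l - k) mod l) = 1\<^sub>m p"
      using map_mat_cnj_mult[OF Y(1)[OF k] dft_slice_carrier[OF W l k]] Y(3)[OF k]
      by (simp add: dft_slice_reflect[OF W l k])
    then show ?thesis
      using inverse_mat_unique[OF dft_slice_carrier[OF W l lk] Y(1)[OF lk] _ Y(2)[OF lk]] Y(1)[OF k] by simp
  qed
  then obtain Z where Z: "is_tensor p p l Z" and hZ: "\<And>k. k < l \<Longrightarrow> dft_slice Z k = Y k"
    using ex_tensor_dft_slices[of l Y p p, OF Y(1) l] by blast
  have "tinv W = Z"
    unfolding tinv_def trows_is_tensor[OF W l] is_tensor_length[OF W]
  proof (rule the_equality)
    show "is_tensor p p l Z \<and> W \<star> Z = tid p l \<and> Z \<star> W = tid p l"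
      using Z Y hZ
      by (auto intro!: dft_slice_eqI[OF is_tensor_tprod is_tensor_tid l]
          simp: dft_slice_tprod[OF W Z l] dft_slice_tprod[OF Z W l] dft_slice_tid[OF l] W l)
  next
    fix B assume B: "is_tensor p p l B \<and> W \<star> B = tid p l \<and> B \<star> W = tid p l"
    show "B = Z"
    proof (rule dft_slice_eqI[OF _ Z l])
      show BT: "is_tensor p p l B" using B by blast
      fix k assume k: "k < l"
      have "dft_slice W k * dft_slice B k = 1\<^sub>m p"
        using B dft_slice_tprod[OF W BT l k] dft_slice_tid[OF l k] by simp
      then show "dft_slice B k = dft_slice Z k"
        using inverse_mat_unique[OF dft_slice_carrier[OF W l k] dft_slice_carrier[OF BT l k] Y(1)[OF k] _
            Y(3)[OF k]]
          hZ[OF k] by simp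
    qed
  qed
  then show "is_tensor p p l (tinv W)" and "\<And>k. k < l \<Longrightarrow> dft_slice W k * dft_slice (tinv W) k = 1\<^sub>m p"
    using Z hZ Y by simp_all
qed

section \<open>The derivative of the t-QR retraction\<close>

lemma tensor_has_deriv_at0_dft_slices:
  assumes l: "0 < l" and F: "\<forall>\<^sub>F t in nhds 0. is_tensor n p l (F t)"
    and D: "\<And>k. k < l \<Longrightarrow> D k \<in> carrier_mat n p"
    and deriv: "\<And>k i j. k < l \<Longrightarrow> i < n \<Longrightarrow> j < p \<Longrightarrow>
      ((\<lambda>t. dft_slice (F t) k $$ (i, j)) has_vector_derivative D k $$ (i, j)) (at 0)"
  obtains T where "tensor_has_deriv_at0 n p l F T" and "cten T = tidft (map D [0..<l])"
proof -
  define DL where "DL = map D [0..<l]"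
  have DL: "is_tensor n p l DL" using D by (simp add: DL_def is_tensor_def)
  have entry:
    "((\<lambda>t. of_real (F t ! m $$ (i, j)) :: complex) has_vector_derivative tidft DL ! m $$ (i, j)) (at 0)"
    if m: "m < l" and i: "i < n" and j: "j < p" for m i j
  proof (rule has_vector_derivative_transform_eventually)
    show "((\<lambda>t. (1 / of_nat l) * (\<Sum>k<l. inverse (dft_omega l) ^ (k * m) * dft_slice (F t) k $$ (i, j)))
        has_vector_derivative tidft DL ! m $$ (i, j)) (at 0)"
      unfolding tidft_index[OF DL l m i j]
      by (intro has_vector_derivative_mult_right has_vector_derivative_sum) (simp add: DL_def deriv i j)
    show "\<forall>\<^sub>F t in nhds 0. (1 / of_nat l) * (\<Sum>k<l. inverse (dft_omega l) ^ (k * m) * dft_slice (F t) k $$ (i, j))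
        = of_real (F t ! m $$ (i, j))"
      using F
    proof eventually_elim
      case (elim t)
      then have "of_real (F t ! m $$ (i, j)) = tidft (tdft (cten (F t))) ! m $$ (i, j)"
        using m i j by (simp add: tidft_tdft[OF is_tensor_cten] l cten_index)
      then show ?case
        using m i j by (simp add: tidft_index[OF is_tensor_tdft[OF is_tensor_cten[OF elim] l] l] dft_slice_def)
    qed
  qed
  have real: "Im (tidft DL ! m $$ (i, j)) = 0" if "m < l" "i < n" "j < p" for m i j
    by (rule Im_has_vector_derivative_eventually_real[OF entry[OF that]]) simp
  have cT: "cten (rten (tidft DL)) = tidft DL" by (rule cten_rten[OF is_tensor_tidft[OF DL l] real])
  have "tensor_has_deriv_at0 n p l F (rten (tidft DL))"
    unfolding tensor_has_deriv_at0_def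
  proof (intro conjI allI impI F is_tensor_rten is_tensor_tidft DL l)
    fix k i j assume "k < l" "i < n" "j < p"
    then show "((\<lambda>t. F t ! k $$ (i, j)) has_real_derivative rten (tidft DL) ! k $$ (i, j)) (at 0)"
      using has_field_derivative_Re[OF entry] by (simp add: rten_index[OF is_tensor_tidft[OF DL l]])
  qed
  then show ?thesis using that cT by (simp add: DL_def)
qed

lemma dft_slice_tadd_tsmult_index:
  assumes A: "is_tensor n p l A" and V: "is_tensor n p l V" and l: "0 < l" and k: "k < l"
    and i: "i < n" and j: "j < p"
  shows "dft_slice (A \<oplus>\<^sub>t tsmult t V) k $$ (i, j)
    = line_entries (entries (dft_slice A k)) (entries (dft_slice V k)) t i j"
  using dft_slice_carrier[OF A l k] dft_slice_carrier[OF V l k] i j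
  by (simp add: dft_slice_tadd[OF A is_tensor_tsmult[OF V] l k] dft_slice_tsmult[OF V l k]
      line_entries_def entries_def)

lemma eventually_qf_line:
  assumes A: "is_tensor n p l A" and V: "is_tensor n p l V" and l: "0 < l"
    and regular: "\<And>k. k < l \<Longrightarrow> gs_regular n p (entries (dft_slice A k))"
  shows "\<forall>\<^sub>F t in nhds 0. is_tensor n p l (qf (A \<oplus>\<^sub>t tsmult t V)) \<and> (\<forall>k<l.
    dft_slice (qf (A \<oplus>\<^sub>t tsmult t V)) k
      = gs_Q n p (line_entries (entries (dft_slice A k)) (entries (dft_slice V k)) t))"
proof -
  have "\<forall>\<^sub>F t in nhds 0. \<forall>k\<in>{..<l}.
      gs_regular n p (line_entries (entries (dft_slice A k)) (entries (dft_slice V k)) t)"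
    using eventually_gs_regular_line[OF regular] by (intro eventually_ball_finite) auto
  then show ?thesis
  proof eventually_elim
    case (elim t)
    let ?A = "A \<oplus>\<^sub>t tsmult t V"
    have AV: "is_tensor n p l ?A" by (rule is_tensor_tadd[OF A is_tensor_tsmult[OF V]])
    have line: "\<And>k. k < l \<Longrightarrow> \<forall>i j. i < n \<longrightarrow> j < p \<longrightarrow>
        entries (dft_slice ?A k) i j = line_entries (entries (dft_slice A k)) (entries (dft_slice V k)) t i j"
      using dft_slice_tadd_tsmult_index[OF A V l] by (simp add: entries_def)
    have regular_t: "gs_regular n p (entries (dft_slice ?A k))" if "k < l" for k
      using elim that line[OF that] by (subst gs_regular_cong) auto
    have "dft_slice (qf ?A) k = gs_Q n p (line_entries (entries (dft_slice A k)) (entries (dft_slice V k)) t)"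
      if "k < l" for k
    proof -
      have "dft_slice (qf ?A) k = gs_Q n p (entries (dft_slice ?A k))"
        by (rule qf_dft_slice(3)[OF AV l regular_t that])
      then show ?thesis using line[OF that] by (auto intro: gs_Q_cong)
    qed
    moreover have "qf ?A \<in> Stiefel n p l" by (rule qf_dft_slice(1)[OF AV l regular_t])
    ultimately show ?case by (simp add: Stiefel_def)
  qed
qed

lemma Pskew_carrier: "Pskew B \<in> carrier_mat (dim_row B) (dim_col B)"
  by (simp add: Pskew_def)

lemma is_tensor_map_Pskew:
  assumes "is_tensor p p l X"
  shows "is_tensor p p l (map Pskew X)"
  unfolding is_tensor_def
proof (intro conjI allI impI)
  show "length (map Pskew X) = l" using is_tensor_length[OF assms] by simp
  fix k assume k: "k < l"
  then have "dim_row (X ! k) = p" "dim_col (X ! k) = p" using is_tensor_slice[OF assms k] by auto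
  then show "map Pskew X ! k \<in> carrier_mat p p"
    using Pskew_carrier[of "X ! k"] k is_tensor_length[OF assms] by simp
qed

lemma tdft_transport:
  assumes Q: "is_tensor n p l Q" and C: "is_tensor n p l C" and l: "0 < l" and k: "k < l"
  shows "tdft ((cten Q \<star> tidft (map Pskew (tdft (cten (ttrans Q \<star> C)))))
      \<oplus>\<^sub>t cten ((tid n l \<ominus>\<^sub>t (Q \<star> ttrans Q)) \<star> C)) ! k
    = dft_slice Q k * Pskew (mat_adjoint (dft_slice Q k) * dft_slice C k)
      + (1\<^sub>m n - dft_slice Q k * mat_adjoint (dft_slice Q k)) * dft_slice C k"
proof -
  note QQ = is_tensor_tprod[OF Q is_tensor_ttrans[OF Q] l]
  note B = is_tensor_tprod[OF is_tensor_ttrans[OF Q] C l]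
  note P = is_tensor_tminus[OF is_tensor_tid QQ]
  have S: "is_tensor p p l (map Pskew (tdft (cten (ttrans Q \<star> C))))"
    by (rule is_tensor_map_Pskew[OF is_tensor_tdft[OF is_tensor_cten[OF B] l]])
  have "tdft (tidft (map Pskew (tdft (cten (ttrans Q \<star> C))))) ! k = Pskew (dft_slice (ttrans Q \<star> C) k)"
    using tdft_tidft[OF S l] k is_tensor_length[OF is_tensor_tdft[OF is_tensor_cten[OF B] l]]
    by (simp add: dft_slice_def)
  then have first: "tdft (cten Q \<star> tidft (map Pskew (tdft (cten (ttrans Q \<star> C))))) ! k
      = dft_slice Q k * Pskew (mat_adjoint (dft_slice Q k) * dft_slice C k)"
    by (simp only: tdft_tprod[OF is_tensor_cten[OF Q] is_tensor_tidft[OF S l] l k] dft_slice_def[symmetric]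
        dft_slice_tprod[OF is_tensor_ttrans[OF Q] C l k] dft_slice_ttrans[OF Q l k])
  have second: "tdft (cten ((tid n l \<ominus>\<^sub>t (Q \<star> ttrans Q)) \<star> C)) ! k
      = (1\<^sub>m n - dft_slice Q k * mat_adjoint (dft_slice Q k)) * dft_slice C k"
    by (simp only: dft_slice_def[symmetric] dft_slice_tprod[OF P C l k] dft_slice_tminus[OF is_tensor_tid QQ l k]
        dft_slice_tid[OF l k] dft_slice_tprod[OF Q is_tensor_ttrans[OF Q] l k] dft_slice_ttrans[OF Q l k])
  show ?thesis
    by (simp only: tdft_tadd[OF is_tensor_tprod[OF is_tensor_cten[OF Q] is_tensor_tidft[OF S l] l]
          is_tensor_cten[OF is_tensor_tprod[OF P C l]] l k] first second)
qed

lemma is_tensor_transport: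
  assumes Q: "is_tensor n p l Q" and C: "is_tensor n p l C" and l: "0 < l"
  shows "is_tensor n p l ((cten Q \<star> tidft (map Pskew (tdft (cten (ttrans Q \<star> C)))))
      \<oplus>\<^sub>t cten ((tid n l \<ominus>\<^sub>t (Q \<star> ttrans Q)) \<star> C))"
proof -
  have "is_tensor p p l (map Pskew (tdft (cten (ttrans Q \<star> C))))"
    by (rule is_tensor_map_Pskew[OF is_tensor_tdft[OF is_tensor_cten[OF
          is_tensor_tprod[OF is_tensor_ttrans[OF Q] C l]] l]])
  then show ?thesis
    by (rule is_tensor_tadd[OF is_tensor_tprod[OF is_tensor_cten[OF Q] is_tensor_tidft[OF _ l] l]
          is_tensor_cten[OF is_tensor_tprod[OF is_tensor_tminus[OF is_tensor_tid
            is_tensor_tprod[OF Q is_tensor_ttrans[OF Q] l]] C l]]])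
qed

lemma dft_slice_tangent:
  assumes X: "is_tensor n p l X" and U: "U \<in> tangent_St n p l X" and l: "0 < l" and k: "k < l"
  shows "mat_adjoint (dft_slice X k) * dft_slice U k + mat_adjoint (dft_slice U k) * dft_slice X k = 0\<^sub>m p p"
proof -
  have UT: "is_tensor n p l U" using U by (simp add: tangent_St_def)
  have "dft_slice ((ttrans X \<star> U) \<oplus>\<^sub>t (ttrans U \<star> X)) k
      = mat_adjoint (dft_slice X k) * dft_slice U k + mat_adjoint (dft_slice U k) * dft_slice X k"
    by (simp add: dft_slice_tadd[OF is_tensor_tprod[OF is_tensor_ttrans[OF X] UT l]
          is_tensor_tprod[OF is_tensor_ttrans[OF UT] X l] l k]
        dft_slice_tprod[OF is_tensor_ttrans[OF X] UT l k] dft_slice_tprod[OF is_tensor_ttrans[OF UT] X l k]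
        dft_slice_ttrans[OF X l k] dft_slice_ttrans[OF UT l k])
  then show ?thesis using U dft_slice_zero[OF l k] by (simp add: tangent_St_def)
qed

lemma gs_regular_stiefel_plus_tangent:
  assumes X: "X \<in> Stiefel n p l" and U: "U \<in> tangent_St n p l X" and l: "0 < l" and k: "k < l"
  shows "gs_regular n p (entries (dft_slice (X \<oplus>\<^sub>t U) k))"
proof -
  have XT: "is_tensor n p l X" using X by (simp add: Stiefel_def)
  have UT: "is_tensor n p l U" using U by (simp add: tangent_St_def)
  show ?thesis
    unfolding dft_slice_tadd[OF XT UT l k]
    by (rule gs_regular_stiefel_tangent[OF dft_slice_carrier[OF XT l k] dft_slice_carrier[OF UT l k]
          dft_slice_stiefel[OF X l k] dft_slice_tangent[OF XT U l k]])
qed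

lemma tinv_tqr_R:
  assumes A: "is_tensor n p l A" and l: "0 < l"
    and regular: "\<And>k. k < l \<Longrightarrow> gs_regular n p (entries (dft_slice A k))"
  shows "is_tensor p p l (tinv (ttrans (qf A) \<star> A))"
    and "\<And>k. k < l \<Longrightarrow> gs_R n p (entries (dft_slice A k)) * dft_slice (tinv (ttrans (qf A) \<star> A)) k = 1\<^sub>m p"
proof -
  let ?W = "ttrans (qf A) \<star> A"
  have "qf A \<in> Stiefel n p l" by (rule qf_dft_slice(1)[OF A l regular])
  then have W: "is_tensor p p l ?W" by (simp add: Stiefel_def is_tensor_tprod[OF is_tensor_ttrans A l])
  have hW: "dft_slice ?W k = gs_R n p (entries (dft_slice A k))" if "k < l" for k
    by (rule qf_dft_slice(4)[OF A l regular that])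
  have inv: "\<And>k. k < l \<Longrightarrow> \<exists>Y \<in> carrier_mat p p. dft_slice ?W k * Y = 1\<^sub>m p \<and> Y * dft_slice ?W k = 1\<^sub>m p"
  proof -
    fix k assume k: "k < l"
    have "gs_R n p (entries (dft_slice A k)) $$ (i, i) \<noteq> 0" if "i < p" for i
      using gs_R_diag[OF regular[OF k] that] gs_residual_pos[OF regular[OF k] that] by simp
    then show "\<exists>Y \<in> carrier_mat p p. dft_slice ?W k * Y = 1\<^sub>m p \<and> Y * dft_slice ?W k = 1\<^sub>m p"
      using upper_triangular_invertible[OF gs_R_carrier upper_triangular_gs_R[OF regular[OF k]]] hW[OF k]
      by auto
  qed
  show "is_tensor p p l (tinv ?W)" by (rule tinv_dft_slice(1)[OF W l inv])
  show "gs_R n p (entries (dft_slice A k)) * dft_slice (tinv ?W) k = 1\<^sub>m p" if "k < l" for k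
    using tinv_dft_slice(2)[OF W l inv that] hW[OF that] by simp
qed

lemma has_vector_derivative_dft_slice_qf_line:
  assumes A: "is_tensor n p l A" and V: "is_tensor n p l V" and l: "0 < l"
    and regular: "\<And>k. k < l \<Longrightarrow> gs_regular n p (entries (dft_slice A k))"
    and k: "k < l" and i: "i < n" and j: "j < p"
  defines "Q \<equiv> dft_slice (qf A) k" and "C \<equiv> dft_slice (V \<star> tinv (ttrans (qf A) \<star> A)) k"
  shows "((\<lambda>t. dft_slice (qf (A \<oplus>\<^sub>t tsmult t V)) k $$ (i, j)) has_vector_derivative
    (Q * Pskew (mat_adjoint Q * C) + (1\<^sub>m n - Q * mat_adjoint Q) * C) $$ (i, j)) (at 0)"
proof (rule has_vector_derivative_transform_eventually)
  have YT: "is_tensor p p l (tinv (ttrans (qf A) \<star> A))" by (rule tinv_tqr_R(1)[OF A l regular])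
  have RY: "gs_R n p (entries (dft_slice A k)) * dft_slice (tinv (ttrans (qf A) \<star> A)) k = 1\<^sub>m p"
    by (rule tinv_tqr_R(2)[OF A l regular k])
  have eqC: "mat n p (\<lambda>(i, j). entries (dft_slice V k) i j) * dft_slice (tinv (ttrans (qf A) \<star> A)) k = C"
    using mat_entries[OF dft_slice_carrier[OF V l k]] by (simp add: C_def dft_slice_tprod[OF V YT l k])
  have eqQ: "gs_Q n p (entries (dft_slice A k)) = Q"
    unfolding Q_def by (rule qf_dft_slice(3)[OF A l regular k, symmetric])
  show "((\<lambda>t. gs_col n (line_entries (entries (dft_slice A k)) (entries (dft_slice V k)) t) j i)
      has_vector_derivative (Q * Pskew (mat_adjoint Q * C) + (1\<^sub>m n - Q * mat_adjoint Q) * C) $$ (i, j)) (at 0)"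
    using has_vector_derivative_gs_col_line[OF regular[OF k] dft_slice_carrier[OF YT l k] RY i j,
        of "entries (dft_slice V k)"]
    unfolding eqC eqQ .
  have "\<forall>\<^sub>F t in nhds 0. is_tensor n p l (qf (A \<oplus>\<^sub>t tsmult t V)) \<and> (\<forall>k<l. dft_slice (qf (A \<oplus>\<^sub>t tsmult t V)) k
      = gs_Q n p (line_entries (entries (dft_slice A k)) (entries (dft_slice V k)) t))"
    by (rule eventually_qf_line[OF A V l regular])
  then show "\<forall>\<^sub>F t in nhds 0. gs_col n (line_entries (entries (dft_slice A k)) (entries (dft_slice V k)) t) j i
      = dft_slice (qf (A \<oplus>\<^sub>t tsmult t V)) k $$ (i, j)"
    by eventually_elim (use k i j in \<open>simp add: gs_Q_def\<close>)
qed

theorem qf_line_has_deriv: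
  assumes A: "is_tensor n p l A" and V: "is_tensor n p l V" and l: "0 < l"
    and regular: "\<And>k. k < l \<Longrightarrow> gs_regular n p (entries (dft_slice A k))"
  shows "let Q = qf A;
             C = V \<star> tinv (ttrans Q \<star> A);
             B = ttrans Q \<star> C;
             Bh = tdft (cten B)
         in \<exists>T. tensor_has_deriv_at0 n p l (\<lambda>t. qf (A \<oplus>\<^sub>t tsmult t V)) T \<and>
                cten T = (cten Q \<star> tidft (map Pskew Bh))
                         \<oplus>\<^sub>t cten ((tid n l \<ominus>\<^sub>t (Q \<star> ttrans Q)) \<star> C)"
proof -
  define Q where "Q = qf A"
  define C where "C = V \<star> tinv (ttrans Q \<star> A)"
  define RHS where "RHS = (cten Q \<star> tidft (map Pskew (tdft (cten (ttrans Q \<star> C)))))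
    \<oplus>\<^sub>t cten ((tid n l \<ominus>\<^sub>t (Q \<star> ttrans Q)) \<star> C)"
  define D where "D k = dft_slice Q k * Pskew (mat_adjoint (dft_slice Q k) * dft_slice C k)
    + (1\<^sub>m n - dft_slice Q k * mat_adjoint (dft_slice Q k)) * dft_slice C k" for k
  have "Q \<in> Stiefel n p l" unfolding Q_def by (rule qf_dft_slice(1)[OF A l regular])
  then have QT: "is_tensor n p l Q" by (simp add: Stiefel_def)
  have CT: "is_tensor n p l C"
    unfolding C_def Q_def by (rule is_tensor_tprod[OF V tinv_tqr_R(1)[OF A l regular] l])
  have D: "D k \<in> carrier_mat n p" if "k < l" for k
    using dft_slice_carrier[OF QT l that] dft_slice_carrier[OF CT l that]
      Pskew_carrier[of "mat_adjoint (dft_slice Q k) * dft_slice C k"]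
    by (auto simp: D_def)
  have "\<forall>\<^sub>F t in nhds 0. is_tensor n p l (qf (A \<oplus>\<^sub>t tsmult t V)) \<and> (\<forall>k<l. dft_slice (qf (A \<oplus>\<^sub>t tsmult t V)) k
      = gs_Q n p (line_entries (entries (dft_slice A k)) (entries (dft_slice V k)) t))"
    by (rule eventually_qf_line[OF A V l regular])
  then have ev: "\<forall>\<^sub>F t in nhds 0. is_tensor n p l (qf (A \<oplus>\<^sub>t tsmult t V))"
    by (rule eventually_mono) blast
  have deriv: "((\<lambda>t. dft_slice (qf (A \<oplus>\<^sub>t tsmult t V)) k $$ (i, j)) has_vector_derivative D k $$ (i, j)) (at 0)"
    if "k < l" "i < n" "j < p" for k i j
    unfolding D_def Q_def C_def by (rule has_vector_derivative_dft_slice_qf_line[OF A V l regular that])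
  obtain T where T: "tensor_has_deriv_at0 n p l (\<lambda>t. qf (A \<oplus>\<^sub>t tsmult t V)) T"
    and cT: "cten T = tidft (map D [0..<l])"
    by (rule tensor_has_deriv_at0_dft_slices[OF l ev D deriv])
  have DL: "is_tensor n p l (map D [0..<l])" using D by (simp add: is_tensor_def)
  have "cten T = RHS"
  proof (rule tdft_eqI[OF _ _ l])
    show "is_tensor n p l (cten T)" unfolding cT by (rule is_tensor_tidft[OF DL l])
    show "is_tensor n p l RHS" unfolding RHS_def by (rule is_tensor_transport[OF QT CT l])
    show "tdft (cten T) ! k = tdft RHS ! k" if "k < l" for k
      using tdft_tidft[OF DL l] that by (simp add: cT RHS_def tdft_transport[OF QT CT l] D_def)
  qed
  then show ?thesis using T unfolding Let_def Q_def C_def RHS_def by blast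
qed

theorem mainTheorem11:
  fixes n p l :: nat and X U V :: "real tensor"
  assumes "0 < l" and "p \<le> n"
    and "X \<in> Stiefel n p l"
    and "U \<in> tangent_St n p l X" and "V \<in> tangent_St n p l X"
  shows "let Q = qf (X \<oplus>\<^sub>t U);
             C = V \<star> tinv (ttrans Q \<star> (X \<oplus>\<^sub>t U));
             B = ttrans Q \<star> C;
             Bh = tdft (cten B)
         in \<exists>T. tensor_has_deriv_at0 n p l (\<lambda>t. qf (X \<oplus>\<^sub>t (U \<oplus>\<^sub>t tsmult t V))) T \<and>
                cten T = (cten Q \<star> tidft (map Pskew Bh))
                         \<oplus>\<^sub>t cten ((tid n l \<ominus>\<^sub>t (Q \<star> ttrans Q)) \<star> C)"
proof -
  have X: "is_tensor n p l X" using assms(3) by (simp add: Stiefel_def)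
  have U: "is_tensor n p l U" and V: "is_tensor n p l V" using assms(4,5) by (simp_all add: tangent_St_def)
  have "X \<oplus>\<^sub>t (U \<oplus>\<^sub>t tsmult t V) = (X \<oplus>\<^sub>t U) \<oplus>\<^sub>t tsmult t V" for t
    by (rule tadd_assoc[OF X U is_tensor_tsmult[OF V]])
  moreover have "let Q = qf (X \<oplus>\<^sub>t U);
             C = V \<star> tinv (ttrans Q \<star> (X \<oplus>\<^sub>t U));
             B = ttrans Q \<star> C;
             Bh = tdft (cten B)
         in \<exists>T. tensor_has_deriv_at0 n p l (\<lambda>t. qf ((X \<oplus>\<^sub>t U) \<oplus>\<^sub>t tsmult t V)) T \<and>
                cten T = (cten Q \<star> tidft (map Pskew Bh))
                         \<oplus>\<^sub>t cten ((tid n l \<ominus>\<^sub>t (Q \<star> ttrans Q)) \<star> C)"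
    by (rule qf_line_has_deriv[OF is_tensor_tadd[OF X U] V assms(1)
          gs_regular_stiefel_plus_tangent[OF assms(3,4,1)]])
  ultimately show ?thesis by simp
qed

end
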